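(* Let $k\ge1$, $d\ge1$ and $n_1,\dots,n_k\ge2$ be integers. For every $\Sigma\in\Sigma_k(n_1,\dots,n_k)$, the linear automorphism of $W_k(d;n_1,\dots,n_k)$ given by the action of $\Sigma$ changes the orientation according to $\mathrm{orient}(\Sigma)$, i.e. it preserves orientation if $\mathrm{orient}(\Sigma)=+1$ and reverses it if $\mathrm{orient}(\Sigma)=-1$. In particular $\mathrm{orient}:\Sigma_k(n_1,\dots,n_k)\to(\{-1,+1\},\cdot)$ is a group homomorphism.
   Context: $W_n=\{x\in\mathbb{R}^n:\sum x_i=0\}$ with $S_n$ acting by $\sigma\cdot(x_1,\dots,x_n)=(x_{\sigma^{-1}(1)},\dots,x_{\sigma^{-1}(n)})$. Wreath product action: if $G$ acts on $X$ and $S_n$ on $Y$, $G^{\times n}\rtimes S_n$ ($S_n$ permuting factors) acts on $X^{\times n}\times Y$ by $(g_1,\dots,g_n;\sigma)\cdot(x_1,\dots,x_n;y)=(g_1x_{\sigma^{-1}(1)},\dots,g_nx_{\sigma^{-1}(n)};\sigma y)$. $\Sigma_1(n_1)=S_{n_1}$, $\Sigma_k(n_1,\dots,n_k)=\Sigma_{k-1}(n_1,\dots,n_{k-1})^{\times n_k}\rtimes S_{n_k}$. $W_1(d;n_1)=W_{n_1}^{\oplus(d-1)}$ (as $\{(z_1,\dots,z_{n_1})\in(\mathbb{R}^{d-1})^{n_1}:\sum z_i=0\}$ with $S_{n_1}$ permuting the $z_i$), $W_k(d;n_1,\dots,n_k)=W_{k-1}(d;n_1,\dots,n_{k-1})^{\oplus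 n_k}\oplus W_{n_k}^{\oplus(d-1)}$ with the inductively defined wreath product action. The orientation function $\mathrm{orient}:\Sigma_k(n_1,\dots,n_k)\to\{-1,+1\}$ is defined by $\mathrm{orient}(\sigma)=(\mathrm{sgn}\,\sigma)^{d-1}$ for $k=1$, and for $k\ge2$ by $\mathrm{orient}(\Sigma_1,\dots,\Sigma_{n_k};\sigma)=(\mathrm{sgn}\,\sigma)^{(d-1)n_1\cdots n_{k-1}}\cdot\mathrm{orient}(\Sigma_1)\cdots\mathrm{orient}(\Sigma_{n_k})$. *)

theory Defs
  imports "Jordan_Normal_Form.Determinant" "HOL-Combinatorics.Permutations"
begin

text \<open>Elements of the iterated wreath products Sigma_k(n_1,...,n_k).
  Base sigma : an element of S_n (a permutation of {0..<n}).
  Node G sigma : the element (G 0, ..., G (n-1); sigma) of Sigma_{k-1}^n semidirect S_n.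
  The parameter list rs used below is rev [n_1,...,n_k] = [n_k,...,n_1] (outermost first).\<close>
datatype wr = Base "nat \<Rightarrow> nat" | Node "nat \<Rightarrow> wr" "nat \<Rightarrow> nat"

fun inSigma :: "nat list \<Rightarrow> wr \<Rightarrow> bool" where
  "inSigma [] S = False"
| "inSigma [n] S = (case S of Base \<sigma> \<Rightarrow> \<sigma> permutes {..<n} | Node G \<sigma> \<Rightarrow> False)"
| "inSigma (n # m # r) S = (case S of Base \<sigma> \<Rightarrow> False
     | Node G \<sigma> \<Rightarrow> \<sigma> permutes {..<n} \<and> (\<forall>i<n. inSigma (m # r) (G i)))"

primrec mult :: "wr \<Rightarrow> wr \<Rightarrow> wr" where
  "mult (Base \<sigma>) T = (case T of Base \<tau> \<Rightarrow> Base (\<sigma> \<circ> \<tau>) | Node H \<tau> \<Rightarrow> Base \<sigma>)"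
| "mult (Node G \<sigma>) T = (case T of Base \<tau> \<Rightarrow> Node G \<sigma>
     | Node H \<tau> \<Rightarrow> Node (\<lambda>i. mult (G i) (H (Hilbert_Choice.inv \<sigma> i))) (\<sigma> \<circ> \<tau>))"

text \<open>Level 1: coordinate [i, j] = j-th component (j < d-1) of z_i.
  Level k: coordinate 0 # i # c = coordinate c of the i-th copy of W_{k-1};
           coordinate [1, i, j] = j-th component of the i-th point in W_{n_k}^(d-1).\<close>
fun Wsp :: "nat \<Rightarrow> nat list \<Rightarrow> (nat list \<Rightarrow> real) set" where
  "Wsp d [] = {}"
| "Wsp d [n] = {x. (\<forall>c. x c \<noteq> 0 \<longrightarrow> (\<exists>i j. c = [i, j] \<and> i < n \<and> j < d - 1))
      \<and> (\<forall>j<d - 1. (\<Sum>i<n. x [i, j]) = 0)}"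
| "Wsp d (n # m # r) = {x. (\<forall>c. x c \<noteq> 0 \<longrightarrow>
         ((\<exists>i c'. c = 0 # i # c' \<and> i < n) \<or> (\<exists>i j. c = [1, i, j] \<and> i < n \<and> j < d - 1)))
      \<and> (\<forall>j<d - 1. (\<Sum>i<n. x [1, i, j]) = 0)
      \<and> (\<forall>i<n. (\<lambda>c'. x (0 # i # c')) \<in> Wsp d (m # r))}"

primrec act :: "wr \<Rightarrow> (nat list \<Rightarrow> real) \<Rightarrow> (nat list \<Rightarrow> real)" where
  "act (Base \<sigma>) x = (\<lambda>c. if length c = 2 then x [Hilbert_Choice.inv \<sigma> (c ! 0), c ! 1] else 0)"
| "act (Node G \<sigma>) x = (\<lambda>c.
     if 2 \<le> length c \<and> c ! 0 = 0
       then act (G (c ! 1)) (\<lambda>c''. x (0 # Hilbert_Choice.inv \<sigma> (c ! 1) # c'')) (drop 2 c)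
     else if length c = 3 \<and> c ! 0 = 1 then x [1, Hilbert_Choice.inv \<sigma> (c ! 1), c ! 2]
     else 0)"

primrec orient :: "nat \<Rightarrow> nat list \<Rightarrow> wr \<Rightarrow> int" where
  "orient d rs (Base \<sigma>) = sign \<sigma> ^ (d - 1)"
| "orient d rs (Node G \<sigma>) = sign \<sigma> ^ ((d - 1) * prod_list (tl rs))
     * (\<Prod>i<hd rs. orient d (tl rs) (G i))"

definition is_basis :: "(nat list \<Rightarrow> real) set \<Rightarrow> (nat list \<Rightarrow> real) list \<Rightarrow> bool" where
  "is_basis W bs \<longleftrightarrow> set bs \<subseteq> W \<and>
     (\<forall>x\<in>W. \<exists>!c. (\<forall>i\<ge>length bs. c i = 0) \<and> x = (\<lambda>p. \<Sum>i<length bs. c i * (bs ! i) p))"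

definition mat_repr :: "(nat list \<Rightarrow> real) list \<Rightarrow> ((nat list \<Rightarrow> real) \<Rightarrow> (nat list \<Rightarrow> real))
    \<Rightarrow> real mat \<Rightarrow> bool" where
  "mat_repr bs f A \<longleftrightarrow> A \<in> carrier_mat (length bs) (length bs) \<and>
     (\<forall>j<length bs. f (bs ! j) = (\<lambda>p. \<Sum>i<length bs. A $$ (i, j) * (bs ! i) p))"

end

theory Submission
  imports Defs
begin

text \<open>
  W_k = W_(k-1)^(n_k) + W_(n_k)^(d-1), and both summands are invariant under
  \<Sigma> = (\<Sigma>_1, ..., \<Sigma>_(n_k); \<sigma>). In a basis adapted to this splitting the matrix of \<Sigma> is
  block diagonal. The first block permutes, according to \<sigma>, the n_k diagonal blocks formed by the
  matrices of the \<Sigma>_i, so its determinant is sgn(\<sigma>)^(dim W_(k-1)) times the product of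
  their determinants; the second block consists of d - 1 copies of the matrix of \<sigma> on W_(n_k),
  each of determinant sgn(\<sigma>). As dim W_(k-1) + d - 1 = (d - 1) n_1 ... n_(k-1), induction on k
  shows that this determinant is orient(\<Sigma>). The determinant of a linear map does not depend on
  the basis, so every matrix of the action has determinant orient(\<Sigma>). Multiplicativity of
  orient follows from that of sgn, the factor of the (\<Sigma>_i) being permuted by \<sigma>^-1.
\<close>

section \<open>Coordinates and the determinant of a linear map\<close>

definition lin_comb :: "(nat \<Rightarrow> real) \<Rightarrow> (nat list \<Rightarrow> real) list \<Rightarrow> nat list \<Rightarrow> real" where
  "lin_comb c bs = (\<lambda>p. \<Sum>i<length bs. c i * (bs ! i) p)"

lemma mat_repr_iff_lin_comb:
  "mat_repr bs f A \<longleftrightarrow> A \<in> carrier_mat (length bs) (length bs) \<and>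
     (\<forall>j<length bs. f (bs ! j) = lin_comb (\<lambda>i. A $$ (i, j)) bs)"
  unfolding mat_repr_def lin_comb_def by simp

lemma lin_comb_cong: "(\<And>i. i < length bs \<Longrightarrow> c i = c' i) \<Longrightarrow> lin_comb c bs = lin_comb c' bs"
  unfolding lin_comb_def by (intro ext sum.cong) auto

lemma lin_comb_zero: "(\<And>i. i < length bs \<Longrightarrow> c i = 0) \<Longrightarrow> lin_comb c bs = (\<lambda>_. 0)"
  unfolding lin_comb_def by simp

lemma lin_comb_diff: "(\<lambda>p. lin_comb c bs p - lin_comb c' bs p) = lin_comb (\<lambda>i. c i - c' i) bs"
  unfolding lin_comb_def by (auto simp: sum_subtractf left_diff_distrib)

lemma lin_comb_unit:
  assumes "j < length bs"
  shows "lin_comb (\<lambda>i. if i = j then 1 else 0) bs = bs ! j"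
proof (rule ext)
  fix p
  have "lin_comb (\<lambda>i. if i = j then 1 else 0) bs p = (\<Sum>i<length bs. if i = j then (bs ! i) p else 0)"
    unfolding lin_comb_def by (intro sum.cong) auto
  then show "lin_comb (\<lambda>i. if i = j then 1 else 0) bs p = (bs ! j) p"
    using assms by simp
qed

lemma sum_lessThan_add_nat: "(\<Sum>i<m + (k::nat). f i) = (\<Sum>i<m. f i) + (\<Sum>i<k. f (m + i))"
  by (induction k) (simp_all add: add.assoc)

lemma lin_comb_append:
  "lin_comb c (xs @ ys) = (\<lambda>q. lin_comb c xs q + lin_comb (\<lambda>k. c (length xs + k)) ys q)"
  unfolding lin_comb_def by (simp add: sum_lessThan_add_nat nth_append)

lemma lin_comb_lin_comb:
  assumes "\<And>k. k < length ys \<Longrightarrow> ys ! k = lin_comb (X k) bs"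
  shows "lin_comb c ys = lin_comb (\<lambda>i. \<Sum>k<length ys. X k i * c k) bs"
proof (rule ext)
  fix p
  have "lin_comb c ys p = (\<Sum>k<length ys. \<Sum>i<length bs. c k * X k i * (bs ! i) p)"
    unfolding lin_comb_def using assms by (simp add: lin_comb_def sum_distrib_left mult.assoc)
  also have "\<dots> = (\<Sum>i<length bs. \<Sum>k<length ys. X k i * c k * (bs ! i) p)"
    by (subst sum.swap) (simp add: mult_ac)
  also have "\<dots> = lin_comb (\<lambda>i. \<Sum>k<length ys. X k i * c k) bs p"
    unfolding lin_comb_def by (simp add: sum_distrib_right)
  finally show "lin_comb c ys p = lin_comb (\<lambda>i. \<Sum>k<length ys. X k i * c k) bs p" .
qed

lemma is_basis_lin_comb_exists: "is_basis W bs \<Longrightarrow> x \<in> W \<Longrightarrow> \<exists>c. x = lin_comb c bs"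
  unfolding is_basis_def lin_comb_def by blast

lemma is_basis_coeff_unique:
  assumes B: "is_basis W bs" and W: "lin_comb c bs \<in> W"
    and eq: "lin_comb c bs = lin_comb c' bs" and i: "i < length bs"
  shows "c i = c' i"
proof -
  define trunc where "trunc = (\<lambda>c i. if i < length bs then c i else (0::real))"
  have trunc: "lin_comb (trunc c) bs = lin_comb c bs" for c
    by (rule lin_comb_cong) (simp add: trunc_def)
  have "\<exists>!u. (\<forall>i\<ge>length bs. u i = 0) \<and> lin_comb c bs = lin_comb u bs"
    using B W unfolding is_basis_def lin_comb_def by auto
  moreover have "(\<forall>i\<ge>length bs. trunc c i = 0) \<and> lin_comb c bs = lin_comb (trunc c) bs"
    and "(\<forall>i\<ge>length bs. trunc c' i = 0) \<and> lin_comb c bs = lin_comb (trunc c') bs"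
    using trunc eq by (auto simp: trunc_def)
  ultimately have "trunc c = trunc c'" by blast
  then show ?thesis using i by (metis trunc_def)
qed

lemma is_basisI:
  assumes sub: "set bs \<subseteq> W" and span: "\<And>x. x \<in> W \<Longrightarrow> \<exists>c. x = lin_comb c bs"
    and indep: "\<And>c. lin_comb c bs = (\<lambda>_. 0) \<Longrightarrow> \<forall>i<length bs. c i = 0"
  shows "is_basis W bs"
  unfolding is_basis_def
proof (intro conjI ballI sub)
  fix x assume "x \<in> W"
  then obtain c where c: "x = lin_comb c bs" using span by blast
  define c0 where "c0 = (\<lambda>i. if i < length bs then c i else 0)"
  have c0: "(\<forall>i\<ge>length bs. c0 i = 0) \<and> x = lin_comb c0 bs"
    unfolding c c0_def by (auto intro: lin_comb_cong)
  have "c' = c0" if c': "(\<forall>i\<ge>length bs. c' i = 0) \<and> x = lin_comb c' bs" for c'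
  proof -
    have "lin_comb (\<lambda>i. c' i - c0 i) bs = (\<lambda>_. 0)"
      using c0 c' lin_comb_diff[of c' bs c0] by (metis diff_self)
    then have "\<forall>i<length bs. c' i - c0 i = 0" by (rule indep)
    then show "c' = c0" using c0 c' by (metis eq_iff_diff_eq_0 not_le ext)
  qed
  with c0 show "\<exists>!c. (\<forall>i\<ge>length bs. c i = 0) \<and> x = (\<lambda>p. \<Sum>i<length bs. c i * (bs ! i) p)"
    unfolding lin_comb_def by blast
qed

lemma index_mult_mat_sum:
  assumes "A \<in> carrier_mat n m" "B \<in> carrier_mat m q" "i < n" "j < q"
  shows "(A * B) $$ (i, j) = (\<Sum>k<m. A $$ (i, k) * B $$ (k, j))"
  using assms by (simp add: scalar_prod_def atLeast0LessThan)

text \<open>Padding P with zero rows and Q with zero columns to square matrices keeps Q * P = 1,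
  but a square matrix with a zero row has determinant 0.\<close>
lemma left_inverse_mat_dim_le:
  fixes P Q :: "real mat"
  assumes P: "P \<in> carrier_mat n n'" and Q: "Q \<in> carrier_mat n' n" and QP: "Q * P = 1\<^sub>m n'"
  shows "n' \<le> n"
proof (rule ccontr)
  assume "\<not> n' \<le> n"
  then have nn: "n < n'" by simp
  define P2 where "P2 = mat n' n' (\<lambda>(i, j). if i < n then P $$ (i, j) else 0)"
  define Q2 where "Q2 = mat n' n' (\<lambda>(i, j). if j < n then Q $$ (i, j) else 0)"
  have P2: "P2 \<in> carrier_mat n' n'" and Q2: "Q2 \<in> carrier_mat n' n'"
    by (auto simp: P2_def Q2_def)
  have "Q2 * P2 = 1\<^sub>m n'"
  proof (rule eq_matI)
    fix i j assume ij: "i < dim_row (1\<^sub>m n')" "j < dim_col (1\<^sub>m n')"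
    have "(Q2 * P2) $$ (i, j) = (\<Sum>k<n'. Q2 $$ (i, k) * P2 $$ (k, j))"
      using ij by (intro index_mult_mat_sum[OF Q2 P2]) auto
    also have "\<dots> = (\<Sum>k<n'. if k < n then Q $$ (i, k) * P $$ (k, j) else 0)"
      using ij by (intro sum.cong) (auto simp: Q2_def P2_def)
    also have "\<dots> = (\<Sum>k<n. Q $$ (i, k) * P $$ (k, j))"
      using nn by (simp add: sum.If_cases lessThan_def[symmetric] Int_absorb1)
    also have "\<dots> = (Q * P) $$ (i, j)" using ij by (simp add: index_mult_mat_sum[OF Q P])
    finally show "(Q2 * P2) $$ (i, j) = 1\<^sub>m n' $$ (i, j)" using QP by simp
  qed (auto simp: Q2_def P2_def)
  then have "det Q2 * det P2 = 1" using det_mult[OF Q2 P2] by simp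
  moreover have "det P2 = 0"
  proof -
    have zero: "(\<Prod>i = 0..<n'. P2 $$ (i, p i)) = 0" if "p permutes {0..<n'}" for p
      using nn permutes_in_image[OF that, of "n' - 1"]
      by (intro prod_zero bexI[of _ "n' - 1"]) (auto simp: P2_def)
    show ?thesis unfolding det_def'[OF P2] by (rule sum.neutral) (simp add: zero)
  qed
  ultimately show False by simp
qed

lemma basis_change_mat_exists:
  assumes "is_basis W bs" and "set bs' \<subseteq> W"
  shows "\<exists>P \<in> carrier_mat (length bs) (length bs').
    \<forall>j<length bs'. bs' ! j = lin_comb (\<lambda>i. P $$ (i, j)) bs"
proof -
  have "\<forall>j<length bs'. \<exists>c. bs' ! j = lin_comb c bs"
    using assms by (meson is_basis_lin_comb_exists nth_mem subsetD)
  then obtain c where c: "\<And>j. j < length bs' \<Longrightarrow> bs' ! j = lin_comb (c j) bs" by metis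
  show ?thesis
    by (intro bexI[of _ "mat (length bs) (length bs') (\<lambda>(i, j). c j i)"])
      (auto simp: c intro: lin_comb_cong)
qed

lemma basis_change_left_inverse:
  assumes B': "is_basis W bs'" and closed: "\<And>c. lin_comb c bs' \<in> W"
    and P: "P \<in> carrier_mat (length bs) (length bs')"
      "\<And>j. j < length bs' \<Longrightarrow> bs' ! j = lin_comb (\<lambda>i. P $$ (i, j)) bs"
    and Q: "Q \<in> carrier_mat (length bs') (length bs)"
      "\<And>j. j < length bs \<Longrightarrow> bs ! j = lin_comb (\<lambda>i. Q $$ (i, j)) bs'"
  shows "Q * P = 1\<^sub>m (length bs')"
proof (rule eq_matI)
  fix i j assume "i < dim_row (1\<^sub>m (length bs'))" "j < dim_col (1\<^sub>m (length bs'))"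
  then have i: "i < length bs'" and j: "j < length bs'" by auto
  have "lin_comb (\<lambda>i. (Q * P) $$ (i, j)) bs' = lin_comb (\<lambda>i. \<Sum>k<length bs. Q $$ (i, k) * P $$ (k, j)) bs'"
    by (rule lin_comb_cong) (simp add: index_mult_mat_sum[OF Q(1) P(1)] j)
  also have "\<dots> = lin_comb (\<lambda>i. P $$ (i, j)) bs"
    by (rule lin_comb_lin_comb[symmetric]) (rule Q(2))
  also have "\<dots> = lin_comb (\<lambda>i. if i = j then 1 else 0) bs'"
    using j by (simp add: P(2) lin_comb_unit)
  finally have "(Q * P) $$ (i, j) = (if i = j then 1 else 0)"
    by (rule is_basis_coeff_unique[OF B' closed _ i])
  then show "(Q * P) $$ (i, j) = 1\<^sub>m (length bs') $$ (i, j)" using i j by simp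
qed (use P Q in auto)

lemma mat_repr_change_basis:
  assumes B': "is_basis W bs'" and closed: "\<And>c. lin_comb c bs' \<in> W"
    and lin: "\<And>c. f (lin_comb c bs) = lin_comb c (map f bs)"
    and P: "P \<in> carrier_mat (length bs) (length bs')"
      "\<And>j. j < length bs' \<Longrightarrow> bs' ! j = lin_comb (\<lambda>i. P $$ (i, j)) bs"
    and Q: "Q \<in> carrier_mat (length bs') (length bs)"
      "\<And>j. j < length bs \<Longrightarrow> bs ! j = lin_comb (\<lambda>i. Q $$ (i, j)) bs'"
    and A: "mat_repr bs f A" and A': "mat_repr bs' f A'"
  shows "A' = Q * (A * P)"
proof -
  have Ac: "A \<in> carrier_mat (length bs) (length bs)"
    and Acol: "\<And>j. j < length bs \<Longrightarrow> f (bs ! j) = lin_comb (\<lambda>i. A $$ (i, j)) bs"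
    using A unfolding mat_repr_iff_lin_comb by auto
  have A'c: "A' \<in> carrier_mat (length bs') (length bs')"
    and A'col: "\<And>j. j < length bs' \<Longrightarrow> f (bs' ! j) = lin_comb (\<lambda>i. A' $$ (i, j)) bs'"
    using A' unfolding mat_repr_iff_lin_comb by auto
  have AP: "A * P \<in> carrier_mat (length bs) (length bs')" using Ac P(1) by simp
  show ?thesis
  proof (rule eq_matI)
    fix i j assume "i < dim_row (Q * (A * P))" "j < dim_col (Q * (A * P))"
    then have i: "i < length bs'" and j: "j < length bs'" using Q(1) AP by auto
    have "lin_comb (\<lambda>i. A' $$ (i, j)) bs' = f (lin_comb (\<lambda>i. P $$ (i, j)) bs)"
      using A'col[OF j] P(2)[OF j] by simp
    also have "\<dots> = lin_comb (\<lambda>i. P $$ (i, j)) (map f bs)" by (rule lin)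
    also have "\<dots> = lin_comb (\<lambda>i. \<Sum>k<length (map f bs). A $$ (i, k) * P $$ (k, j)) bs"
      by (rule lin_comb_lin_comb) (simp add: Acol)
    also have "\<dots> = lin_comb (\<lambda>i. (A * P) $$ (i, j)) bs"
      by (rule lin_comb_cong) (simp add: index_mult_mat_sum[OF Ac P(1)] j)
    also have "\<dots> = lin_comb (\<lambda>i. \<Sum>k<length bs. Q $$ (i, k) * (A * P) $$ (k, j)) bs'"
      by (rule lin_comb_lin_comb) (rule Q(2))
    also have "\<dots> = lin_comb (\<lambda>i. (Q * (A * P)) $$ (i, j)) bs'"
      by (rule lin_comb_cong) (simp add: index_mult_mat_sum[OF Q(1) AP] j)
    finally show "A' $$ (i, j) = (Q * (A * P)) $$ (i, j)"
      by (rule is_basis_coeff_unique[OF B' closed _ i])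
  qed (use A'c Q(1) AP in auto)
qed

theorem det_mat_repr_basis_indep:
  assumes B: "is_basis W bs" and B': "is_basis W bs'"
    and closed: "\<And>c. lin_comb c bs \<in> W" and closed': "\<And>c. lin_comb c bs' \<in> W"
    and lin: "\<And>c. f (lin_comb c bs) = lin_comb c (map f bs)"
    and A: "mat_repr bs f A" and A': "mat_repr bs' f A'"
  shows "det A' = det A"
proof -
  have sub: "set bs \<subseteq> W" and sub': "set bs' \<subseteq> W" using B B' unfolding is_basis_def by auto
  obtain P where P: "P \<in> carrier_mat (length bs) (length bs')"
    "\<And>j. j < length bs' \<Longrightarrow> bs' ! j = lin_comb (\<lambda>i. P $$ (i, j)) bs"
    using basis_change_mat_exists[OF B sub'] by blast
  obtain Q where Q: "Q \<in> carrier_mat (length bs') (length bs)"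
    "\<And>j. j < length bs \<Longrightarrow> bs ! j = lin_comb (\<lambda>i. Q $$ (i, j)) bs'"
    using basis_change_mat_exists[OF B' sub] by blast
  have QP: "Q * P = 1\<^sub>m (length bs')"
    by (rule basis_change_left_inverse[OF B' closed' P Q])
  have PQ: "P * Q = 1\<^sub>m (length bs)"
    by (rule basis_change_left_inverse[OF B closed Q P])
  have len: "length bs' = length bs"
    using left_inverse_mat_dim_le[OF P(1) Q(1) QP] left_inverse_mat_dim_le[OF Q(1) P(1) PQ] by simp
  have Ac: "A \<in> carrier_mat (length bs) (length bs)" using A by (simp add: mat_repr_def)
  have "det A' = det (Q * (A * P))"
    using mat_repr_change_basis[OF B' closed' lin P Q A A'] by simp
  also have "\<dots> = det A * det (Q * P)"
    using P(1) Q(1) Ac len by (simp add: det_mult[of _ "length bs"])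
  also have "\<dots> = det A" using QP by simp
  finally show ?thesis .
qed

section \<open>Block and permutation matrices\<close>

lemma mult_add_less_mult_nat:
  assumes "(a::nat) < n" "b < w"
  shows "a * w + b < n * w"
proof -
  have "a * w + b < Suc a * w" using assms(2) by simp
  also have "\<dots> \<le> n * w" using assms(1) by (intro mult_le_mono1) simp
  finally show ?thesis .
qed

lemma mult_add_eq_mult_add_nat:
  assumes "(b::nat) < w" "b' < w"
  shows "q * w + b = q' * w + b' \<longleftrightarrow> q = q' \<and> b = b'"
proof
  assume eq: "q * w + b = q' * w + b'"
  have "(q * w + b) div w = (q' * w + b') div w" "(q * w + b) mod w = (q' * w + b') mod w"
    unfolding eq by simp_all
  then show "q = q' \<and> b = b'" using assms by simp
qed simp

lemma mult_add_div_nat: "(b::nat) < w \<Longrightarrow> (a * w + b) div w = a"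
  by simp

lemma div_mod_eq_iff_nat: "(x::nat) div w = y div w \<and> x mod w = y mod w \<longleftrightarrow> x = y"
  by (metis div_mult_mod_eq)

definition block_diag_mat :: "nat \<Rightarrow> nat \<Rightarrow> (nat \<Rightarrow> real mat) \<Rightarrow> real mat" where
  "block_diag_mat k w Ms = mat (k * w) (k * w)
     (\<lambda>(a, b). if a div w = b div w then Ms (a div w) $$ (a mod w, b mod w) else 0)"

lemma block_diag_mat_dim[simp]:
  "dim_row (block_diag_mat k w Ms) = k * w" "dim_col (block_diag_mat k w Ms) = k * w"
  by (simp_all add: block_diag_mat_def)

lemma block_diag_mat_carrier[simp]: "block_diag_mat k w Ms \<in> carrier_mat (k * w) (k * w)"
  by (simp add: block_diag_mat_def)

lemma block_diag_mat_index:
  assumes "a < k" "b < k" "i < w" "j < w"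
  shows "block_diag_mat k w Ms $$ (a * w + i, b * w + j) = (if a = b then Ms a $$ (i, j) else 0)"
  using assms by (simp add: block_diag_mat_def mult_add_less_mult_nat)

lemma div_mod_last_block_nat:
  assumes "k * w \<le> (x::nat)" "x < k * w + w"
  shows "x div w = k" "x mod w = x - k * w"
proof -
  have "x = k * w + (x - k * w)" "x - k * w < w" using assms by simp_all
  then show "x div w = k" "x mod w = x - k * w" by (metis div_mult_self3 div_less add_0_right
      less_nat_zero_code mod_mult_self3 mod_less)+
qed

lemma block_diag_mat_Suc:
  assumes w: "w > 0" and Mk: "Ms k \<in> carrier_mat w w"
  shows "block_diag_mat (Suc k) w Ms
    = four_block_mat (block_diag_mat k w Ms) (0\<^sub>m (k * w) w) (0\<^sub>m w (k * w)) (Ms k)"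
    (is "_ = ?F")
proof (rule eq_matI)
  fix a b assume "a < dim_row ?F" "b < dim_col ?F"
  then have a: "a < k * w + w" and b: "b < k * w + w" using Mk by auto
  have low: "x div w < k \<longleftrightarrow> x < k * w" for x
    using w by (simp add: div_less_iff_less_mult)
  show "block_diag_mat (Suc k) w Ms $$ (a, b) = ?F $$ (a, b)"
  proof (cases "a < k * w"; cases "b < k * w")
    assume "\<not> a < k * w" "\<not> b < k * w"
    then show ?thesis
      using a b Mk div_mod_last_block_nat[of k w a] div_mod_last_block_nat[of k w b]
      by (simp add: block_diag_mat_def index_mat_four_block)
  qed (use a b Mk low[of a] low[of b] in \<open>auto simp: block_diag_mat_def index_mat_four_block\<close>)
qed (use Mk in auto)

lemma det_block_diag_mat:
  assumes "\<And>i. i < k \<Longrightarrow> Ms i \<in> carrier_mat w w"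
  shows "det (block_diag_mat k w Ms) = (\<Prod>i<k. det (Ms i))"
  using assms
proof (induction k)
  case 0
  have "block_diag_mat 0 w Ms \<in> carrier_mat 0 0" using block_diag_mat_carrier[of 0 w Ms] by simp
  then show ?case by simp
next
  case (Suc k)
  show ?case
  proof (cases "w = 0")
    case True
    then have "block_diag_mat (Suc k) w Ms \<in> carrier_mat 0 0"
      and "\<And>i. i < Suc k \<Longrightarrow> det (Ms i) = 1" using Suc.prems by auto
    then show ?thesis by simp
  next
    case False
    have Mk: "Ms k \<in> carrier_mat w w" using Suc.prems by simp
    have "block_diag_mat (Suc k) w Ms
      = four_block_mat (block_diag_mat k w Ms) (0\<^sub>m (k * w) w) (0\<^sub>m w (k * w)) (Ms k)"
      using False Mk by (intro block_diag_mat_Suc) auto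
    then have "det (block_diag_mat (Suc k) w Ms) = det (block_diag_mat k w Ms) * det (Ms k)"
      using Mk by (simp add: det_four_block_mat_lower_left_zero[of _ "k * w" _ w])
    then show ?thesis using Suc by simp
  qed
qed

definition perm_mat :: "nat \<Rightarrow> (nat \<Rightarrow> nat) \<Rightarrow> real mat" where
  "perm_mat n \<sigma> = mat n n (\<lambda>(i, j). if i = \<sigma> j then 1 else 0)"

lemma perm_mat_dim[simp]: "dim_row (perm_mat n \<sigma>) = n" "dim_col (perm_mat n \<sigma>) = n"
  by (simp_all add: perm_mat_def)

lemma perm_mat_carrier[simp]: "perm_mat n \<sigma> \<in> carrier_mat n n"
  by (simp add: perm_mat_def)

lemma det_perm_mat:
  assumes \<sigma>: "\<sigma> permutes {..<n}"
  shows "det (perm_mat n \<sigma>) = signof \<sigma>"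
proof -
  have "transpose_mat (perm_mat n \<sigma>) = mat n n (\<lambda>(i, j). (1\<^sub>m n :: real mat) $$ (\<sigma> i, j))"
    using permutes_in_image[OF \<sigma>] by (intro eq_matI) (auto simp: perm_mat_def)
  then have "det (transpose_mat (perm_mat n \<sigma>)) = signof \<sigma> * det (1\<^sub>m n :: real mat)"
    using \<sigma> by (simp add: det_permute_rows atLeast0LessThan)
  then show ?thesis by (simp add: det_transpose[of _ n])
qed

lemma det_permute_rows_cols:
  fixes X :: "real mat"
  assumes \<tau>: "\<tau> permutes {..<n}" and X: "X \<in> carrier_mat n n"
  shows "det (mat n n (\<lambda>(a, b). X $$ (\<tau> a, \<tau> b))) = det X"
proof -
  have \<tau>': "\<tau> permutes {0..<n}" using \<tau> by (simp add: atLeast0LessThan)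
  have \<tau>n: "\<And>i. i < n \<Longrightarrow> \<tau> i < n" using permutes_in_image[OF \<tau>] by auto
  define Y where "Y = mat n n (\<lambda>(a, b). X $$ (a, \<tau> b))"
  have Y: "Y \<in> carrier_mat n n" by (simp add: Y_def)
  have "mat n n (\<lambda>(a, b). X $$ (\<tau> a, \<tau> b)) = mat n n (\<lambda>(i, j). Y $$ (\<tau> i, j))"
    using \<tau>n by (intro eq_matI) (auto simp: Y_def)
  then have rows: "det (mat n n (\<lambda>(a, b). X $$ (\<tau> a, \<tau> b))) = signof \<tau> * det Y"
    using det_permute_rows[OF Y \<tau>'] by simp
  have "transpose_mat Y = mat n n (\<lambda>(i, j). transpose_mat X $$ (\<tau> i, j))"
    using \<tau>n X by (intro eq_matI) (auto simp: Y_def)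
  then have "det (transpose_mat Y) = signof \<tau> * det (transpose_mat X)"
    using det_permute_rows[of "transpose_mat X" n \<tau>] X \<tau>' by simp
  then have cols: "det Y = signof \<tau> * det X" using det_transpose[OF Y] det_transpose[OF X] by simp
  have "(signof \<tau> :: real) * signof \<tau> = 1" by (metis of_int_1 of_int_mult sign_idempotent)
  then show ?thesis unfolding rows cols by (simp add: mult.assoc[symmetric])
qed

lemma permutes_lessThan_if_inj_on:
  assumes "\<And>x. x \<ge> (n::nat) \<Longrightarrow> f x = x" "\<And>x. x < n \<Longrightarrow> f x < n" "inj_on f {..<n}"
  shows "f permutes {..<n}"
proof (rule bij_imp_permutes)
  have "f ` {..<n} = {..<n}" by (intro endo_inj_surj finite_lessThan) (use assms in auto)
  then show "bij_betw f {..<n} {..<n}" using assms(3) by (simp add: bij_betw_def)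
qed (use assms in auto)

definition transpose_index :: "nat \<Rightarrow> nat \<Rightarrow> nat \<Rightarrow> nat" where
  "transpose_index n w x = (if x < n * w then (x mod n) * w + x div n else x)"

lemma transpose_index_permutes: "transpose_index n w permutes {..<n * w}"
proof (rule permutes_lessThan_if_inj_on)
  fix x assume x: "x < n * w"
  then have "n > 0" by (cases n) auto
  with x have "x mod n < n" and "x div n < w"
    by (auto intro: less_mult_imp_div_less simp: mult.commute[of n])
  then show "transpose_index n w x < n * w"
    using x by (simp add: transpose_index_def mult_add_less_mult_nat)
next
  show "inj_on (transpose_index n w) {..<n * w}"
  proof (rule inj_onI)
    fix x y assume "x \<in> {..<n * w}" "y \<in> {..<n * w}" "transpose_index n w x = transpose_index n w y"
    moreover have "x div n < w" "y div n < w"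
      using calculation(1,2) by (auto intro: less_mult_imp_div_less simp: mult.commute[of n])
    ultimately have "x div n = y div n \<and> x mod n = y mod n"
      by (auto simp: transpose_index_def mult_add_eq_mult_add_nat)
    then show "x = y" by (simp only: div_mod_eq_iff_nat)
  qed
qed (simp add: transpose_index_def)

definition block_lift_perm :: "nat \<Rightarrow> nat \<Rightarrow> (nat \<Rightarrow> nat) \<Rightarrow> nat \<Rightarrow> nat" where
  "block_lift_perm n w \<sigma> x = (if x < n * w then \<sigma> (x div w) * w + x mod w else x)"

lemma block_lift_perm_permutes:
  assumes \<sigma>: "\<sigma> permutes {..<n}"
  shows "block_lift_perm n w \<sigma> permutes {..<n * w}"
proof (rule permutes_lessThan_if_inj_on)
  have \<sigma>n: "\<And>i. i < n \<Longrightarrow> \<sigma> i < n" using permutes_in_image[OF \<sigma>] by auto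
  fix x assume x: "x < n * w"
  then have "w > 0" by (cases w) auto
  then show "block_lift_perm n w \<sigma> x < n * w"
    using x \<sigma>n[OF less_mult_imp_div_less[OF x]] by (simp add: block_lift_perm_def mult_add_less_mult_nat)
next
  show "inj_on (block_lift_perm n w \<sigma>) {..<n * w}"
  proof (rule inj_onI)
    fix x y assume x: "x \<in> {..<n * w}" and y: "y \<in> {..<n * w}"
      and "block_lift_perm n w \<sigma> x = block_lift_perm n w \<sigma> y"
    moreover have "w > 0" using x by (cases w) auto
    ultimately have "\<sigma> (x div w) = \<sigma> (y div w) \<and> x mod w = y mod w"
      by (simp add: block_lift_perm_def mult_add_eq_mult_add_nat)
    then have "x div w = y div w \<and> x mod w = y mod w" using permutes_inj[OF \<sigma>] by (simp add: inj_eq)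
    then show "x = y" by (simp only: div_mod_eq_iff_nat)
  qed
qed (simp add: block_lift_perm_def)

text \<open>Conjugating by the transposition of the n x w index grid turns the permutation matrix of
  the lifted permutation into w diagonal copies of the permutation matrix of \<sigma>.\<close>
lemma sign_block_lift_perm:
  assumes \<sigma>: "\<sigma> permutes {..<n}"
  shows "(signof (block_lift_perm n w \<sigma>) :: real) = signof \<sigma> ^ w"
proof -
  let ?L = "block_lift_perm n w \<sigma>" and ?t = "transpose_index n w"
  define X where "X = perm_mat (n * w) ?L"
  have "mat (n * w) (n * w) (\<lambda>(a, b). X $$ (?t a, ?t b)) = block_diag_mat w n (\<lambda>_. perm_mat n \<sigma>)"
  proof (rule eq_matI)
    fix a b assume "a < dim_row (block_diag_mat w n (\<lambda>_. perm_mat n \<sigma>))"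
      "b < dim_col (block_diag_mat w n (\<lambda>_. perm_mat n \<sigma>))"
    then have a: "a < n * w" and b: "b < n * w" by (auto simp: mult.commute)
    then have n: "n > 0" by (cases n) auto
    have div: "a div n < w" "b div n < w"
      using a b by (auto intro: less_mult_imp_div_less simp: mult.commute[of n])
    have t: "?t a = (a mod n) * w + a div n" "?t b = (b mod n) * w + b div n"
      using a b by (auto simp: transpose_index_def)
    have tn: "?t a < n * w" "?t b < n * w"
      unfolding t using div n by (auto intro: mult_add_less_mult_nat)
    have "?L (?t b) = \<sigma> (b mod n) * w + b div n"
      using tn t div by (simp add: block_lift_perm_def)
    then have "X $$ (?t a, ?t b) = (if a mod n = \<sigma> (b mod n) \<and> a div n = b div n then 1 else 0)"
      using tn div by (simp add: X_def perm_mat_def t mult_add_eq_mult_add_nat)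
    moreover have "block_diag_mat w n (\<lambda>_. perm_mat n \<sigma>) $$ (a, b)
      = (if a div n = b div n then (if a mod n = \<sigma> (b mod n) then 1 else 0) else 0)"
      using a b n by (simp add: block_diag_mat_def perm_mat_def mult.commute[of w n])
    ultimately show "mat (n * w) (n * w) (\<lambda>(a, b). X $$ (?t a, ?t b)) $$ (a, b)
      = block_diag_mat w n (\<lambda>_. perm_mat n \<sigma>) $$ (a, b)"
      using a b by simp
  qed (auto simp: mult.commute)
  moreover have "det (mat (n * w) (n * w) (\<lambda>(a, b). X $$ (?t a, ?t b))) = det X"
    by (rule det_permute_rows_cols[OF transpose_index_permutes]) (simp add: X_def)
  ultimately have "det X = det (block_diag_mat w n (\<lambda>_. perm_mat n \<sigma>))" by simp
  also have "\<dots> = signof \<sigma> ^ w" by (simp add: det_block_diag_mat det_perm_mat[OF \<sigma>])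
  finally show ?thesis using det_perm_mat[OF block_lift_perm_permutes[OF \<sigma>]] by (simp add: X_def)
qed

definition block_perm_mat :: "nat \<Rightarrow> nat \<Rightarrow> (nat \<Rightarrow> real mat) \<Rightarrow> (nat \<Rightarrow> nat) \<Rightarrow> real mat" where
  "block_perm_mat n w Ms \<sigma> = mat (n * w) (n * w)
     (\<lambda>(a, b). if a div w = \<sigma> (b div w) then Ms (a div w) $$ (a mod w, b mod w) else 0)"

lemma block_perm_mat_dim[simp]:
  "dim_row (block_perm_mat n w Ms \<sigma>) = n * w" "dim_col (block_perm_mat n w Ms \<sigma>) = n * w"
  by (simp_all add: block_perm_mat_def)

lemma block_perm_mat_carrier[simp]: "block_perm_mat n w Ms \<sigma> \<in> carrier_mat (n * w) (n * w)"
  by (simp add: block_perm_mat_def)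

lemma block_perm_mat_index:
  assumes "a < n" "b < n" "i < w" "j < w"
  shows "block_perm_mat n w Ms \<sigma> $$ (a * w + i, b * w + j) = (if a = \<sigma> b then Ms a $$ (i, j) else 0)"
  using assms by (simp add: block_perm_mat_def mult_add_less_mult_nat)

lemma det_block_perm_mat:
  assumes \<sigma>: "\<sigma> permutes {..<n}" and Ms: "\<And>i. i < n \<Longrightarrow> Ms i \<in> carrier_mat w w"
  shows "det (block_perm_mat n w Ms \<sigma>) = signof \<sigma> ^ w * (\<Prod>i<n. det (Ms i))"
proof (cases "w = 0")
  case True
  then show ?thesis using Ms by (simp add: block_perm_mat_def)
next
  case False
  let ?L = "block_lift_perm n w \<sigma>" and ?M = "block_perm_mat n w Ms \<sigma>"
  have \<sigma>n: "\<And>i. i < n \<Longrightarrow> \<sigma> i < n" using permutes_in_image[OF \<sigma>] by auto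
  have "mat (n * w) (n * w) (\<lambda>(a, b). ?M $$ (?L a, b)) = block_diag_mat n w (\<lambda>i. Ms (\<sigma> i))"
  proof (rule eq_matI)
    fix a b assume "a < dim_row (block_diag_mat n w (\<lambda>i. Ms (\<sigma> i)))"
      "b < dim_col (block_diag_mat n w (\<lambda>i. Ms (\<sigma> i)))"
    then have a: "a < n * w" and b: "b < n * w" by auto
    have L: "?L a = \<sigma> (a div w) * w + a mod w" using a by (simp add: block_lift_perm_def)
    have La: "?L a < n * w"
      unfolding L using False \<sigma>n[OF less_mult_imp_div_less[OF a]] by (simp add: mult_add_less_mult_nat)
    have "?L a div w = \<sigma> (a div w)" "?L a mod w = a mod w" unfolding L using False by simp_all
    then have "?M $$ (?L a, b)
      = (if \<sigma> (a div w) = \<sigma> (b div w) then Ms (\<sigma> (a div w)) $$ (a mod w, b mod w) else 0)"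
      using La b by (simp add: block_perm_mat_def)
    also have "\<dots> = block_diag_mat n w (\<lambda>i. Ms (\<sigma> i)) $$ (a, b)"
      using a b permutes_inj[OF \<sigma>] by (simp add: block_diag_mat_def inj_eq)
    finally show "mat (n * w) (n * w) (\<lambda>(a, b). ?M $$ (?L a, b)) $$ (a, b)
      = block_diag_mat n w (\<lambda>i. Ms (\<sigma> i)) $$ (a, b)"
      using a b by simp
  qed auto
  moreover have "det (mat (n * w) (n * w) (\<lambda>(a, b). ?M $$ (?L a, b))) = signof ?L * det ?M"
    by (rule det_permute_rows) (use block_lift_perm_permutes[OF \<sigma>] in \<open>simp_all add: lessThan_atLeast0\<close>)
  ultimately have "signof ?L * det ?M = det (block_diag_mat n w (\<lambda>i. Ms (\<sigma> i)))" by simp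
  also have "\<dots> = (\<Prod>i<n. det (Ms i))"
    using \<sigma>n Ms prod.permute[OF \<sigma>, of "\<lambda>i. det (Ms i)"] by (simp add: det_block_diag_mat comp_def)
  finally show ?thesis
    using sign_block_lift_perm[OF \<sigma>, of w] by (metis mult.assoc mult_1 of_int_1 of_int_mult sign_idempotent)
qed

text \<open>The matrix of \<sigma> acting on the sum-zero vectors of R^n, in the basis e_i - e_(n-1), i < n - 1.\<close>
definition sum_zero_perm_mat :: "nat \<Rightarrow> (nat \<Rightarrow> nat) \<Rightarrow> real mat" where
  "sum_zero_perm_mat n \<sigma> = mat (n - 1) (n - 1)
     (\<lambda>(a, i). (if a = \<sigma> i then 1 else 0) - (if a = \<sigma> (n - 1) then 1 else 0))"

lemma sum_zero_perm_mat_carrier[simp]: "sum_zero_perm_mat n \<sigma> \<in> carrier_mat (n - 1) (n - 1)"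
  by (simp add: sum_zero_perm_mat_def)

lemma perm_mat_mult_index:
  assumes \<sigma>: "\<sigma> permutes {..<n}" and T: "T \<in> carrier_mat n n" and "a < n" "i < n"
  shows "(perm_mat n \<sigma> * T) $$ (a, i) = T $$ (Hilbert_Choice.inv \<sigma> a, i)"
proof -
  have "(perm_mat n \<sigma> * T) $$ (a, i) = (\<Sum>k<n. perm_mat n \<sigma> $$ (a, k) * T $$ (k, i))"
    by (rule index_mult_mat_sum[OF perm_mat_carrier T assms(3,4)])
  also have "\<dots> = (\<Sum>k<n. if k = Hilbert_Choice.inv \<sigma> a then T $$ (k, i) else 0)"
    by (rule sum.cong) (use assms permutes_inverses[OF \<sigma>] in \<open>auto simp: perm_mat_def\<close>)
  finally show ?thesis using assms permutes_in_image[OF permutes_inv[OF \<sigma>]] by simp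
qed

lemma sum_shear_row:
  assumes a: "a < Suc m"
  shows "(\<Sum>k<Suc m. ((if a = k then 1 else 0) - (if a = m \<and> k < m then 1 else 0)) * (g k :: real))
     = g a - (if a = m then \<Sum>k<m. g k else 0)"
proof -
  have "(\<Sum>k<Suc m. ((if a = k then 1 else 0) - (if a = m \<and> k < m then 1 else 0)) * g k)
    = (\<Sum>k<Suc m. (if k = a then g k else 0) - (if a = m \<and> k < m then g k else 0))"
    by (intro sum.cong) auto
  also have "\<dots> = (\<Sum>k<Suc m. if k = a then g k else 0) - (\<Sum>k<Suc m. if a = m \<and> k < m then g k else 0)"
    by (rule sum_subtractf)
  also have "(\<Sum>k<Suc m. if k = a then g k else 0) = g a" using a by (simp add: sum.delta)
  also have "(\<Sum>k<Suc m. if a = m \<and> k < m then g k else 0) = (if a = m then \<Sum>k<m. g k else 0)"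
    by (cases "a = m") simp_all
  finally show ?thesis .
qed

text \<open>The columns of sum_zero_frame_mat m are the basis e_i - e_m (i < m), e_m of R^(m+1), and
  framed_perm_mat m \<sigma> is the matrix of \<sigma> in this basis.\<close>
definition sum_zero_frame_mat :: "nat \<Rightarrow> real mat" where
  "sum_zero_frame_mat m = mat (Suc m) (Suc m)
     (\<lambda>(a, i). (if a = i then 1 else 0) - (if a = m \<and> i < m then 1 else 0))"

definition framed_perm_mat :: "nat \<Rightarrow> (nat \<Rightarrow> nat) \<Rightarrow> real mat" where
  "framed_perm_mat m \<sigma> = four_block_mat (sum_zero_perm_mat (Suc m) \<sigma>)
     (mat m 1 (\<lambda>(k, _). if k = \<sigma> m then 1 else 0)) (0\<^sub>m 1 m) (1\<^sub>m 1)"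

lemma sum_zero_frame_mat_dim[simp]:
  "dim_row (sum_zero_frame_mat m) = Suc m" "dim_col (sum_zero_frame_mat m) = Suc m"
  by (simp_all add: sum_zero_frame_mat_def)

lemma framed_perm_mat_dim[simp]:
  "dim_row (framed_perm_mat m \<sigma>) = Suc m" "dim_col (framed_perm_mat m \<sigma>) = Suc m"
  by (simp_all add: framed_perm_mat_def sum_zero_perm_mat_def)

lemma sum_zero_frame_mat_carrier[simp]: "sum_zero_frame_mat m \<in> carrier_mat (Suc m) (Suc m)"
  by (rule carrier_matI) simp_all

lemma framed_perm_mat_carrier[simp]: "framed_perm_mat m \<sigma> \<in> carrier_mat (Suc m) (Suc m)"
  by (rule carrier_matI) simp_all

lemma framed_perm_mat_index:
  assumes "k < Suc m" "i < Suc m"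
  shows "framed_perm_mat m \<sigma> $$ (k, i) = (if k < m then (if i < m then
       (if k = \<sigma> i then 1 else 0) - (if k = \<sigma> m then 1 else 0) else (if k = \<sigma> m then 1 else 0))
     else (if i < m then 0 else 1))"
  using assms by (simp add: framed_perm_mat_def sum_zero_perm_mat_def index_mat_four_block)

lemma det_sum_zero_frame_mat: "det (sum_zero_frame_mat m) = 1"
proof -
  have "det (sum_zero_frame_mat m) = prod_list (diag_mat (sum_zero_frame_mat m))"
    by (rule det_lower_triangular[OF _ sum_zero_frame_mat_carrier]) (auto simp: sum_zero_frame_mat_def)
  also have "diag_mat (sum_zero_frame_mat m) = map (\<lambda>_. 1) [0..<Suc m]"
    by (auto simp: diag_mat_def sum_zero_frame_mat_def)
  finally show ?thesis by (simp add: map_replicate_const)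
qed

lemma det_framed_perm_mat: "det (framed_perm_mat m \<sigma>) = det (sum_zero_perm_mat (Suc m) \<sigma>)"
  unfolding framed_perm_mat_def
  by (subst det_four_block_mat_lower_left_zero[of _ m _ 1]) (auto simp: sum_zero_perm_mat_def)

lemma perm_mat_mult_sum_zero_frame_mat:
  assumes \<sigma>: "\<sigma> permutes {..<Suc m}"
  shows "perm_mat (Suc m) \<sigma> * sum_zero_frame_mat m = sum_zero_frame_mat m * framed_perm_mat m \<sigma>"
    (is "_ * ?T = ?T * ?F")
proof (rule eq_matI)
  fix a i assume "a < dim_row (?T * ?F)" "i < dim_col (?T * ?F)"
  then have a: "a < Suc m" and i: "i < Suc m" by auto
  have \<sigma>m: "\<sigma> i < Suc m" "\<sigma> m < Suc m" using permutes_in_image[OF \<sigma>] i by auto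
  have inv: "\<And>a i. Hilbert_Choice.inv \<sigma> a = i \<longleftrightarrow> a = \<sigma> i" using permutes_inverses[OF \<sigma>] by metis
  have "Hilbert_Choice.inv \<sigma> a < Suc m" using permutes_in_image[OF permutes_inv[OF \<sigma>]] a by simp
  then have L: "(perm_mat (Suc m) \<sigma> * ?T) $$ (a, i) = (if Hilbert_Choice.inv \<sigma> a = i then 1 else 0)
      - (if Hilbert_Choice.inv \<sigma> a = m \<and> i < m then 1 else 0)"
    using perm_mat_mult_index[OF \<sigma> sum_zero_frame_mat_carrier a i] i by (simp add: sum_zero_frame_mat_def)
  have "(?T * ?F) $$ (a, i) = (\<Sum>k<Suc m. ?T $$ (a, k) * ?F $$ (k, i))"
    by (rule index_mult_mat_sum[OF sum_zero_frame_mat_carrier framed_perm_mat_carrier a i])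
  also have "\<dots> = (\<Sum>k<Suc m. ((if a = k then 1 else 0) - (if a = m \<and> k < m then 1 else 0)) * ?F $$ (k, i))"
    by (rule sum.cong) (use a in \<open>auto simp: sum_zero_frame_mat_def\<close>)
  also have "\<dots> = ?F $$ (a, i) - (if a = m then \<Sum>k<m. ?F $$ (k, i) else 0)"
    by (rule sum_shear_row[OF a])
  finally have R: "(?T * ?F) $$ (a, i) = ?F $$ (a, i) - (if a = m then \<Sum>k<m. ?F $$ (k, i) else 0)" .
  have "(\<Sum>k<m. ?F $$ (k, i)) = (\<Sum>k<m. if i < m then (if k = \<sigma> i then 1 else 0) - (if k = \<sigma> m then 1 else 0)
      else (if k = \<sigma> m then 1 else 0))"
    by (intro sum.cong) (use i in \<open>auto simp: framed_perm_mat_index\<close>)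
  also have "\<dots> = (if i < m then (if \<sigma> i < m then 1 else 0) - (if \<sigma> m < m then 1 else 0)
      else (if \<sigma> m < m then 1 else 0))"
    by (cases "i < m") (simp_all add: sum_subtractf sum.delta' eq_commute[of _ "\<sigma> _"])
  finally have col: "(\<Sum>k<m. ?F $$ (k, i)) = \<dots>" .
  have cases: "a < m \<or> a = m" "i < m \<or> i = m" "\<sigma> i < m \<or> \<sigma> i = m" "\<sigma> m < m \<or> \<sigma> m = m"
    using a i \<sigma>m by auto
  show "(perm_mat (Suc m) \<sigma> * ?T) $$ (a, i) = (?T * ?F) $$ (a, i)"
    unfolding L R col framed_perm_mat_index[OF a i] inv
    using cases permutes_inj[OF \<sigma>] by (elim disjE) (auto simp: inj_eq)
qed auto

lemma det_sum_zero_perm_mat: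
  assumes \<sigma>: "\<sigma> permutes {..<n}" and n: "1 \<le> n"
  shows "det (sum_zero_perm_mat n \<sigma>) = signof \<sigma>"
proof -
  obtain m where nm: "n = Suc m" using n by (cases n) auto
  have T: "sum_zero_frame_mat m \<in> carrier_mat n n" and F: "framed_perm_mat m \<sigma> \<in> carrier_mat n n"
    by (simp_all add: nm)
  have "perm_mat n \<sigma> * sum_zero_frame_mat m = sum_zero_frame_mat m * framed_perm_mat m \<sigma>"
    unfolding nm by (rule perm_mat_mult_sum_zero_frame_mat[OF \<sigma>[unfolded nm]])
  then have "det (perm_mat n \<sigma>) * det (sum_zero_frame_mat m) = det (sum_zero_frame_mat m) * det (framed_perm_mat m \<sigma>)"
    by (simp add: det_mult[OF perm_mat_carrier T, symmetric] det_mult[OF T F, symmetric])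
  then show ?thesis using det_perm_mat[OF \<sigma>] by (simp add: det_sum_zero_frame_mat det_framed_perm_mat nm)
qed

section \<open>A basis of W_k\<close>

lemma sum_nonzero_imp_term_nonzero: "(\<Sum>i<k. f i) \<noteq> (0::real) \<Longrightarrow> \<exists>i<k. f i \<noteq> 0"
  by (metis lessThan_iff sum.neutral)

lemma Wsp_sum_closed:
  assumes "rs \<noteq> []" and "\<And>i. i < (k::nat) \<Longrightarrow> g i \<in> Wsp d rs"
  shows "(\<lambda>p. \<Sum>i<k. c i * g i p) \<in> Wsp d rs"
  using assms
proof (induction d rs arbitrary: g rule: Wsp.induct)
  case (1 d)
  then show ?case by simp
next
  case (2 d n)
  have g: "\<And>i. i < k \<Longrightarrow> g i \<in> Wsp d [n]" by fact
  show ?case unfolding Wsp.simps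
  proof (intro CollectI conjI allI impI)
    fix q assume "(\<Sum>i<k. c i * g i q) \<noteq> 0"
    then obtain i where "i < k" "g i q \<noteq> 0" using sum_nonzero_imp_term_nonzero by force
    then show "\<exists>i j. q = [i, j] \<and> i < n \<and> j < d - 1" using g by simp
  next
    fix j assume "j < d - 1"
    then show "(\<Sum>i'<n. \<Sum>i<k. c i * g i [i', j]) = 0"
      using g by (subst sum.swap) (simp add: sum_distrib_left[symmetric])
  qed
next
  case (3 d n m r)
  have g: "\<And>i. i < k \<Longrightarrow> g i \<in> Wsp d (n # m # r)" by fact
  show ?case unfolding Wsp.simps
  proof (intro CollectI conjI allI impI)
    fix q assume "(\<Sum>i<k. c i * g i q) \<noteq> 0"
    then obtain i where "i < k" "g i q \<noteq> 0" using sum_nonzero_imp_term_nonzero by force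
    then show "(\<exists>i c'. q = 0 # i # c' \<and> i < n) \<or> (\<exists>i j. q = [1, i, j] \<and> i < n \<and> j < d - 1)"
      using g by simp
  next
    fix j assume "j < d - 1"
    then show "(\<Sum>i'<n. \<Sum>i<k. c i * g i [1, i', j]) = 0"
      using g by (subst sum.swap) (simp add: sum_distrib_left[symmetric])
  next
    fix i' assume "i' < n"
    then show "(\<lambda>c'. \<Sum>i<k. c i * g i (0 # i' # c')) \<in> Wsp d (m # r)"
      using "3.IH"[where g = "\<lambda>l c'. g l (0 # i' # c')"] g by simp
  qed
qed

lemma Wsp_zero: "rs \<noteq> [] \<Longrightarrow> (\<lambda>_. 0) \<in> Wsp d rs"
  using Wsp_sum_closed[where k = 0 and g = "\<lambda>_ _. 0" and c = "\<lambda>_. 0"] by simp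

lemma Wsp_lin_comb: "rs \<noteq> [] \<Longrightarrow> set bs \<subseteq> Wsp d rs \<Longrightarrow> lin_comb c bs \<in> Wsp d rs"
  unfolding lin_comb_def by (rule Wsp_sum_closed) auto

lemma Wsp_diff:
  assumes "rs \<noteq> []" "x \<in> Wsp d rs" "y \<in> Wsp d rs"
  shows "(\<lambda>p. x p - y p) \<in> Wsp d rs"
proof -
  have "(\<lambda>p. \<Sum>i<Suc (Suc 0). (if i = 0 then 1 else -1) * (if i = 0 then x else y) p) \<in> Wsp d rs"
    by (rule Wsp_sum_closed) (use assms in auto)
  then show ?thesis by simp
qed

definition unit_fun :: "nat list \<Rightarrow> nat list \<Rightarrow> real" where
  "unit_fun a = (\<lambda>q. if q = a then 1 else 0)"

definition diff_vec :: "nat list \<Rightarrow> nat \<Rightarrow> nat \<Rightarrow> nat \<Rightarrow> nat list \<Rightarrow> real" where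
  "diff_vec pre n i j = (\<lambda>q. unit_fun (pre @ [i, j]) q - unit_fun (pre @ [n - 1, j]) q)"

text \<open>The basis of W_n^(d-1), placed at the coordinates below the prefix pre; its vector number
  j (n - 1) + i is diff_vec pre n i j.\<close>
definition sum_zero_basis :: "nat list \<Rightarrow> nat \<Rightarrow> nat \<Rightarrow> (nat list \<Rightarrow> real) list" where
  "sum_zero_basis pre n d = map (\<lambda>p. diff_vec pre n (p mod (n - 1)) (p div (n - 1))) [0..<(d - 1) * (n - 1)]"

definition sum_zero_pos :: "nat list \<Rightarrow> nat \<Rightarrow> nat \<Rightarrow> nat list" where
  "sum_zero_pos pre n p = pre @ [p mod (n - 1), p div (n - 1)]"

lemma length_sum_zero_basis[simp]: "length (sum_zero_basis pre n d) = (d - 1) * (n - 1)"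
  by (simp add: sum_zero_basis_def)

lemma nth_sum_zero_basis:
  "p < (d - 1) * (n - 1) \<Longrightarrow> sum_zero_basis pre n d ! p = diff_vec pre n (p mod (n - 1)) (p div (n - 1))"
  by (simp add: sum_zero_basis_def)

lemma sum_zero_pos_index:
  "i < n - 1 \<Longrightarrow> sum_zero_pos pre n (j * (n - 1) + i) = pre @ [i, j]"
  by (simp add: sum_zero_pos_def)

lemma sum_zero_basis_at_pos:
  assumes "p < (d - 1) * (n - 1)" "p' < (d - 1) * (n - 1)"
  shows "(sum_zero_basis pre n d ! p') (sum_zero_pos pre n p) = (if p' = p then 1 else 0)"
proof -
  have "n - 1 > 0" using assms by (cases "n - 1") auto
  then have i: "p mod (n - 1) < n - 1" by simp
  have "diff_vec pre n i' j' (pre @ [i, j]) = (if i' = i \<and> j' = j then 1 else 0)" if "i < n - 1" for i j i' j'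
    using that by (auto simp: diff_vec_def unit_fun_def)
  from this[OF i] show ?thesis
    using assms(2) div_mod_eq_iff_nat[of p' "n - 1" p] by (auto simp: nth_sum_zero_basis sum_zero_pos_def)
qed

lemma sum_zero_part_eq_zero:
  assumes n: "2 \<le> n" and j: "j < d - 1" and sum: "(\<Sum>i<n. x (pre @ [i, j])) = 0"
    and pos: "\<forall>p<(d - 1) * (n - 1). x (sum_zero_pos pre n p) = 0" and i: "i < n"
  shows "x (pre @ [i, j]) = 0"
proof -
  have below: "x (pre @ [i', j]) = 0" if "i' < n - 1" for i'
    using pos[rule_format, of "j * (n - 1) + i'"] sum_zero_pos_index[of i' n pre j] that j
    by (simp add: mult_add_less_mult_nat)
  obtain m where m: "n = Suc m" using n by (cases n) auto
  then have "(\<Sum>i<n. x (pre @ [i, j])) = (\<Sum>i<n - 1. x (pre @ [i, j])) + x (pre @ [n - 1, j])"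
    by simp
  then have "x (pre @ [n - 1, j]) = 0" using sum below by simp
  moreover have "i < n - 1 \<or> i = n - 1" using i by linarith
  ultimately show ?thesis using below by auto
qed

definition embed_summand :: "nat \<Rightarrow> (nat list \<Rightarrow> real) \<Rightarrow> nat list \<Rightarrow> real" where
  "embed_summand i y = (\<lambda>c. if 2 \<le> length c \<and> c ! 0 = 0 \<and> c ! 1 = i then y (drop 2 c) else 0)"

lemma embed_summand_Cons[simp]: "embed_summand i y (0 # a # q) = (if a = i then y q else 0)"
  by (simp add: embed_summand_def)

lemma embed_summand_other: "\<not> (\<exists>a q'. q = 0 # a # q') \<Longrightarrow> embed_summand i y q = 0"
  unfolding embed_summand_def by (cases q; cases "tl q") auto

definition embed_basis :: "nat \<Rightarrow> (nat list \<Rightarrow> real) list \<Rightarrow> (nat list \<Rightarrow> real) list" where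
  "embed_basis n B = map (\<lambda>p. embed_summand (p div length B) (B ! (p mod length B))) [0..<n * length B]"

lemma length_embed_basis[simp]: "length (embed_basis n B) = n * length B"
  by (simp add: embed_basis_def)

lemma nth_embed_basis:
  "p < n * length B \<Longrightarrow> embed_basis n B ! p = embed_summand (p div length B) (B ! (p mod length B))"
  by (simp add: embed_basis_def)

fun wreath_basis :: "nat \<Rightarrow> nat list \<Rightarrow> (nat list \<Rightarrow> real) list" where
  "wreath_basis d [] = []"
| "wreath_basis d [n] = sum_zero_basis [] n d"
| "wreath_basis d (n # m # r) = embed_basis n (wreath_basis d (m # r)) @ sum_zero_basis [1] n d"

text \<open>The p-th basis vector is 1 at the coordinate wreath_pos d rs p, where all other basis
  vectors vanish.\<close>
fun wreath_pos :: "nat \<Rightarrow> nat list \<Rightarrow> nat \<Rightarrow> nat list" where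
  "wreath_pos d [] p = []"
| "wreath_pos d [n] p = sum_zero_pos [] n p"
| "wreath_pos d (n # m # r) p = (let w = length (wreath_basis d (m # r)) in
     if p < n * w then 0 # p div w # wreath_pos d (m # r) (p mod w)
     else sum_zero_pos [1] n (p - n * w))"

lemma wreath_pos_summand:
  assumes "i < n" "k < length (wreath_basis d (m # r))"
  shows "wreath_pos d (n # m # r) (i * length (wreath_basis d (m # r)) + k) = 0 # i # wreath_pos d (m # r) k"
  using assms by (simp add: Let_def mult_add_less_mult_nat mult_add_div_nat)

lemma wreath_pos_sum_zero:
  "wreath_pos d (n # m # r) (n * length (wreath_basis d (m # r)) + p) = sum_zero_pos [1] n p"
  by simp

definition admissible :: "nat list \<Rightarrow> bool" where
  "admissible rs \<longleftrightarrow> rs \<noteq> [] \<and> (\<forall>n\<in>set rs. 2 \<le> n)"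

lemma admissible_simps[simp]:
  "\<not> admissible []"
  "admissible [n] \<longleftrightarrow> 2 \<le> n"
  "admissible (n # m # r) \<longleftrightarrow> 2 \<le> n \<and> admissible (m # r)"
  by (auto simp: admissible_def)

lemma length_wreath_basis:
  "admissible rs \<Longrightarrow> length (wreath_basis d rs) + (d - 1) = (d - 1) * prod_list rs"
proof (induction d rs rule: wreath_basis.induct)
  case (2 d n)
  then have "(d - 1) * (n - 1) + (d - 1) = (d - 1) * n" by (simp add: diff_mult_distrib2)
  then show ?case by simp
next
  case (3 d n m r)
  then have "(d - 1) * (n - 1) + (d - 1) = (d - 1) * n" by (simp add: diff_mult_distrib2)
  then have "length (wreath_basis d (n # m # r)) + (d - 1)
      = n * (length (wreath_basis d (m # r)) + (d - 1))"
    by (simp add: algebra_simps)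
  then show ?case using 3 by simp
qed simp

lemma diff_vec_column_sum:
  assumes "i < n"
  shows "(\<Sum>i'<n. diff_vec pre n i j (pre @ [i', j'])) = 0"
proof (cases "j' = j")
  case True
  then show ?thesis using assms by (simp add: diff_vec_def unit_fun_def sum_subtractf)
qed (simp add: diff_vec_def unit_fun_def)

lemma embed_summand_in_Wsp:
  assumes i: "i < n" and y: "y \<in> Wsp d (m # r)"
  shows "embed_summand i y \<in> Wsp d (n # m # r)"
  unfolding Wsp.simps
proof (intro CollectI conjI allI impI)
  fix q assume "embed_summand i y q \<noteq> 0"
  then show "(\<exists>i c'. q = 0 # i # c' \<and> i < n) \<or> (\<exists>i j. q = [1, i, j] \<and> i < n \<and> j < d - 1)"
    using i by (cases "\<exists>a q'. q = 0 # a # q'") (auto simp: embed_summand_other split: if_splits)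
next
  fix j show "(\<Sum>i'<n. embed_summand i y [1, i', j]) = 0" by (simp add: embed_summand_def)
next
  fix i' show "(\<lambda>c'. embed_summand i y (0 # i' # c')) \<in> Wsp d (m # r)"
    using Wsp_zero[of "m # r" d] y by (cases "i' = i") auto
qed

lemma sum_zero_basis_subset:
  assumes "\<And>i j. i < n - 1 \<Longrightarrow> j < d - 1 \<Longrightarrow> diff_vec pre n i j \<in> W"
  shows "set (sum_zero_basis pre n d) \<subseteq> W"
proof
  fix b assume "b \<in> set (sum_zero_basis pre n d)"
  then obtain p where p: "p < (d - 1) * (n - 1)" and b: "b = diff_vec pre n (p mod (n - 1)) (p div (n - 1))"
    by (auto simp: sum_zero_basis_def)
  then have "n - 1 > 0" by (cases "n - 1") auto
  then show "b \<in> W" using b assms less_mult_imp_div_less[OF p] by simp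
qed

lemma embed_basis_subset:
  assumes "\<And>i k. i < n \<Longrightarrow> k < length B \<Longrightarrow> embed_summand i (B ! k) \<in> W"
  shows "set (embed_basis n B) \<subseteq> W"
proof
  fix b assume "b \<in> set (embed_basis n B)"
  then obtain p where p: "p < n * length B"
    and b: "b = embed_summand (p div length B) (B ! (p mod length B))"
    by (auto simp: embed_basis_def)
  then have "length B > 0" by (cases "length B") auto
  then show "b \<in> W" using b assms less_mult_imp_div_less[OF p] by simp
qed

lemma wreath_basis_subset: "admissible rs \<Longrightarrow> set (wreath_basis d rs) \<subseteq> Wsp d rs"
proof (induction d rs rule: wreath_basis.induct)
  case (2 d n)
  show ?case unfolding wreath_basis.simps
  proof (rule sum_zero_basis_subset)
    fix i j assume "i < n - 1" "j < d - 1"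
    then show "diff_vec [] n i j \<in> Wsp d [n]"
      using diff_vec_column_sum[of i n "[]" j] by (auto simp: diff_vec_def unit_fun_def)
  qed
next
  case (3 d n m r)
  have "set (sum_zero_basis [1] n d) \<subseteq> Wsp d (n # m # r)"
  proof (rule sum_zero_basis_subset)
    fix i j assume "i < n - 1" "j < d - 1"
    then show "diff_vec [1] n i j \<in> Wsp d (n # m # r)"
      using Wsp_zero[of "m # r" d] diff_vec_column_sum[of i n "[1]" j]
      by (auto simp: diff_vec_def unit_fun_def)
  qed
  moreover have "set (embed_basis n (wreath_basis d (m # r))) \<subseteq> Wsp d (n # m # r)"
  proof (rule embed_basis_subset)
    fix i k assume "i < n" "k < length (wreath_basis d (m # r))"
    then have "wreath_basis d (m # r) ! k \<in> Wsp d (m # r)" using 3 by auto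
    with \<open>i < n\<close> show "embed_summand i (wreath_basis d (m # r) ! k) \<in> Wsp d (n # m # r)"
      by (rule embed_summand_in_Wsp)
  qed
  ultimately show ?case by simp
qed simp

lemma wreath_basis_at_pos:
  assumes "admissible rs" "p < length (wreath_basis d rs)" "p' < length (wreath_basis d rs)"
  shows "(wreath_basis d rs ! p') (wreath_pos d rs p) = (if p' = p then 1 else 0)"
  using assms
proof (induction d rs arbitrary: p p' rule: wreath_basis.induct)
  case (2 d n)
  then show ?case by (simp add: sum_zero_basis_at_pos)
next
  case (3 d n m r)
  define B where "B = wreath_basis d (m # r)"
  define w where "w = length B"
  have len: "length (wreath_basis d (n # m # r)) = n * w + (d - 1) * (n - 1)"
    by (simp add: B_def w_def)
  have nth: "wreath_basis d (n # m # r) ! q = (if q < n * w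
      then embed_summand (q div w) (B ! (q mod w)) else sum_zero_basis [1] n d ! (q - n * w))" for q
    by (simp add: B_def w_def nth_append nth_embed_basis)
  have pos: "wreath_pos d (n # m # r) p = (if p < n * w
      then 0 # p div w # wreath_pos d (m # r) (p mod w) else sum_zero_pos [1] n (p - n * w))"
    by (simp add: B_def w_def Let_def)
  have mod: "q mod w < w" if "q < n * w" for q using that by (cases w) auto
  have bounds: "p < n * w + (d - 1) * (n - 1)" "p' < n * w + (d - 1) * (n - 1)"
    using "3.prems"(2,3) by (simp_all only: len)
  show ?case
  proof (cases "p < n * w"; cases "p' < n * w")
    assume p: "p < n * w" and p': "p' < n * w"
    have "(B ! (p' mod w)) (wreath_pos d (m # r) (p mod w)) = (if p' mod w = p mod w then 1 else 0)"
      using "3.IH" "3.prems"(1) mod[OF p] mod[OF p'] by (simp add: B_def w_def)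
    then show ?thesis
      unfolding nth pos using p p' div_mod_eq_iff_nat[of p' w p] by auto
  next
    assume p: "\<not> p < n * w" and p': "p' < n * w"
    then show ?thesis unfolding nth pos by (simp add: sum_zero_pos_def embed_summand_def)
  next
    assume p: "p < n * w" and p': "\<not> p' < n * w"
    then have "p' - n * w < (d - 1) * (n - 1)" using bounds by simp
    then show ?thesis
      unfolding nth pos using p p' by (simp add: nth_sum_zero_basis diff_vec_def unit_fun_def)
  next
    assume p: "\<not> p < n * w" and p': "\<not> p' < n * w"
    have "p - n * w < (d - 1) * (n - 1)" "p' - n * w < (d - 1) * (n - 1)"
      using bounds p p' by simp_all
    then show ?thesis
      unfolding nth pos using p p' sum_zero_basis_at_pos[of "p - n * w" d n "p' - n * w" "[1]"] by auto
  qed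
qed simp

lemma lin_comb_wreath_basis_at_pos:
  assumes "admissible rs" "p < length (wreath_basis d rs)"
  shows "lin_comb c (wreath_basis d rs) (wreath_pos d rs p) = c p"
proof -
  have "lin_comb c (wreath_basis d rs) (wreath_pos d rs p)
      = (\<Sum>i<length (wreath_basis d rs). if i = p then c i else 0)"
    unfolding lin_comb_def by (intro sum.cong) (auto simp: wreath_basis_at_pos assms)
  then show ?thesis using assms(2) by simp
qed

lemma Wsp_eq_zeroI:
  assumes "admissible rs" "x \<in> Wsp d rs"
    and "\<forall>p<length (wreath_basis d rs). x (wreath_pos d rs p) = 0"
  shows "x = (\<lambda>_. 0)"
  using assms
proof (induction d rs arbitrary: x rule: wreath_basis.induct)
  case (2 d n)
  have n: "2 \<le> n" using "2.prems"(1) by simp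
  have support: "\<forall>c. x c \<noteq> 0 \<longrightarrow> (\<exists>i j. c = [] @ [i, j] \<and> i < n \<and> j < d - 1)"
    and sums: "\<forall>j<d - 1. (\<Sum>i<n. x ([] @ [i, j])) = 0"
    using "2.prems"(2) by simp_all
  have pos: "\<forall>p<(d - 1) * (n - 1). x (sum_zero_pos [] n p) = 0"
    using "2.prems"(3) by simp
  have "x c = 0" for c
    using support sum_zero_part_eq_zero[OF n _ _ pos] sums by metis
  then show ?case by auto
next
  case (3 d n m r)
  define w where "w = length (wreath_basis d (m # r))"
  have n: "2 \<le> n" using "3.prems"(1) by simp
  have support: "\<forall>c. x c \<noteq> 0 \<longrightarrow> (\<exists>i c'. c = 0 # i # c' \<and> i < n)
      \<or> (\<exists>i j. c = [1] @ [i, j] \<and> i < n \<and> j < d - 1)"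
    and sums: "\<forall>j<d - 1. (\<Sum>i<n. x ([1] @ [i, j])) = 0"
    and summands: "\<forall>i<n. (\<lambda>c'. x (0 # i # c')) \<in> Wsp d (m # r)"
    using "3.prems"(2) by simp_all
  have pos: "x (wreath_pos d (n # m # r) p) = 0" if "p < n * w + (d - 1) * (n - 1)" for p
    using "3.prems"(3) that by (simp add: w_def)
  have summand_zero: "(\<lambda>c'. x (0 # i # c')) = (\<lambda>_. 0)" if i: "i < n" for i
  proof (rule "3.IH")
    show "admissible (m # r)" using "3.prems"(1) by simp
    show "(\<lambda>c'. x (0 # i # c')) \<in> Wsp d (m # r)" using summands i by simp
    show "\<forall>k<length (wreath_basis d (m # r)). x (0 # i # wreath_pos d (m # r) k) = 0"
    proof (intro allI impI)
      fix k assume k: "k < length (wreath_basis d (m # r))"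
      have "i * w + k < n * w" using i k by (simp add: w_def mult_add_less_mult_nat)
      then show "x (0 # i # wreath_pos d (m # r) k) = 0"
        using pos[of "i * w + k"] by (simp add: w_def wreath_pos_summand[OF i k] del: wreath_pos.simps)
    qed
  qed
  have pos_sum_zero: "\<forall>p<(d - 1) * (n - 1). x (sum_zero_pos [1] n p) = 0"
  proof (intro allI impI)
    fix p assume "p < (d - 1) * (n - 1)"
    then show "x (sum_zero_pos [1] n p) = 0"
      using pos[of "n * w + p"] by (simp add: w_def wreath_pos_sum_zero del: wreath_pos.simps)
  qed
  have "x c = 0" for c
    using support summand_zero sum_zero_part_eq_zero[OF n _ _ pos_sum_zero] sums by (metis fun_cong)
  then show ?case by auto
qed simp

lemma is_basis_wreath_basis:
  assumes rs: "admissible rs"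
  shows "is_basis (Wsp d rs) (wreath_basis d rs)"
proof (rule is_basisI)
  show sub: "set (wreath_basis d rs) \<subseteq> Wsp d rs" by (rule wreath_basis_subset[OF rs])
  have ne: "rs \<noteq> []" using rs by (auto simp: admissible_def)
  fix x assume x: "x \<in> Wsp d rs"
  define c where "c = (\<lambda>p. x (wreath_pos d rs p))"
  have "(\<lambda>q. x q - lin_comb c (wreath_basis d rs) q) = (\<lambda>_. 0)"
    by (rule Wsp_eq_zeroI[OF rs Wsp_diff[OF ne x Wsp_lin_comb[OF ne sub]]])
      (simp add: lin_comb_wreath_basis_at_pos[OF rs] c_def)
  then have "x = lin_comb c (wreath_basis d rs)" by (simp add: fun_eq_iff)
  then show "\<exists>c. x = lin_comb c (wreath_basis d rs)" by blast
next
  fix c assume zero: "lin_comb c (wreath_basis d rs) = (\<lambda>_. 0)"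
  show "\<forall>p<length (wreath_basis d rs). c p = 0"
  proof (intro allI impI)
    fix p assume "p < length (wreath_basis d rs)"
    then show "c p = 0" using lin_comb_wreath_basis_at_pos[OF rs, of p d c] zero by simp
  qed
qed

section \<open>The matrix of the action\<close>

lemma act_sum: "act S (\<lambda>p. \<Sum>i<k. c i * g i p) = (\<lambda>p. \<Sum>i<k. c i * act S (g i) p)"
proof (induction S arbitrary: g)
  case (Base \<sigma>)
  show ?case by (rule ext) simp
next
  case (Node G \<sigma>)
  show ?case
  proof (rule ext)
    fix q
    show "act (Node G \<sigma>) (\<lambda>p. \<Sum>i<k. c i * g i p) q = (\<Sum>i<k. c i * act (Node G \<sigma>) (g i) q)"
    proof (cases "2 \<le> length q \<and> q ! 0 = 0")
      case True
      let ?h = "\<lambda>i c'. g i (0 # Hilbert_Choice.inv \<sigma> (q ! 1) # c')"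
      have "act (G (q ! 1)) (\<lambda>p. \<Sum>i<k. c i * ?h i p) = (\<lambda>p. \<Sum>i<k. c i * act (G (q ! 1)) (?h i) p)"
        by (rule Node.IH) simp
      then show ?thesis using True by simp
    next
      case False
      then have act: "\<And>X. act (Node G \<sigma>) X q
          = (if length q = 3 \<and> q ! 0 = 1 then X [1, Hilbert_Choice.inv \<sigma> (q ! 1), q ! 2] else 0)"
        by auto
      show ?thesis
      proof (cases "length q = 3 \<and> q ! 0 = 1")
        case True
        then show ?thesis unfolding act by simp
      next
        case False
        then show ?thesis unfolding act by (simp only: if_not_P[OF False]) simp
      qed
    qed
  qed
qed

lemma act_zero: "act S (\<lambda>_. 0) = (\<lambda>_. 0)"
  using act_sum[where S = S and k = 0 and c = "\<lambda>_. 0" and g = "\<lambda>_ _. 0"] by simp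

lemma act_lin_comb: "act S (lin_comb c bs) = lin_comb c (map (act S) bs)"
  unfolding lin_comb_def by (simp add: act_sum)

lemma act_embed_summand:
  assumes \<sigma>: "\<sigma> permutes {..<n}"
  shows "act (Node G \<sigma>) (embed_summand i y) = embed_summand (\<sigma> i) (act (G (\<sigma> i)) y)"
proof (rule ext)
  fix q
  have inv: "\<And>a. Hilbert_Choice.inv \<sigma> a = i \<longleftrightarrow> a = \<sigma> i" using permutes_inverses[OF \<sigma>] by metis
  show "act (Node G \<sigma>) (embed_summand i y) q = embed_summand (\<sigma> i) (act (G (\<sigma> i)) y) q"
  proof (cases "\<exists>a q'. q = 0 # a # q'")
    case True
    then obtain a q' where q: "q = 0 # a # q'" by blast
    have "(\<lambda>c. embed_summand i y (0 # Hilbert_Choice.inv \<sigma> a # c)) = (if a = \<sigma> i then y else (\<lambda>_. 0))"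
      using inv by auto
    then show ?thesis unfolding q by (simp add: act_zero)
  next
    case False
    then have "\<not> (2 \<le> length q \<and> q ! 0 = 0)" by (cases q; cases "tl q") auto
    then show ?thesis using False by (auto simp: embed_summand_other)
  qed
qed

lemma act_diff_vec_Base:
  assumes \<sigma>: "\<sigma> permutes {..<n}"
  shows "act (Base \<sigma>) (diff_vec [] n i j) = (\<lambda>q. unit_fun ([] @ [\<sigma> i, j]) q - unit_fun ([] @ [\<sigma> (n - 1), j]) q)"
proof (rule ext)
  fix q
  have inv: "\<And>a i. Hilbert_Choice.inv \<sigma> a = i \<longleftrightarrow> a = \<sigma> i" using permutes_inverses[OF \<sigma>] by metis
  show "act (Base \<sigma>) (diff_vec [] n i j) q = unit_fun ([] @ [\<sigma> i, j]) q - unit_fun ([] @ [\<sigma> (n - 1), j]) q"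
  proof (cases "length q = 2")
    case True
    then obtain a b where "q = [a, b]" by (cases q; cases "tl q") auto
    then show ?thesis using inv by (simp add: diff_vec_def unit_fun_def)
  qed (auto simp: unit_fun_def)
qed

lemma act_diff_vec_Node:
  assumes \<sigma>: "\<sigma> permutes {..<n}"
  shows "act (Node G \<sigma>) (diff_vec [1] n i j)
    = (\<lambda>q. unit_fun ([1] @ [\<sigma> i, j]) q - unit_fun ([1] @ [\<sigma> (n - 1), j]) q)"
proof (rule ext)
  fix q
  have inv: "\<And>a i. Hilbert_Choice.inv \<sigma> a = i \<longleftrightarrow> a = \<sigma> i" using permutes_inverses[OF \<sigma>] by metis
  show "act (Node G \<sigma>) (diff_vec [1] n i j) q
    = unit_fun ([1] @ [\<sigma> i, j]) q - unit_fun ([1] @ [\<sigma> (n - 1), j]) q"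
  proof (cases "2 \<le> length q \<and> q ! 0 = 0")
    case True
    have "(\<lambda>c. diff_vec [1] n i j (0 # Hilbert_Choice.inv \<sigma> (q ! 1) # c)) = (\<lambda>_. 0)"
      by (auto simp: diff_vec_def unit_fun_def)
    then show ?thesis using True by (auto simp: act_zero unit_fun_def)
  next
    case False
    show ?thesis
    proof (cases "length q = 3 \<and> q ! 0 = 1")
      case True
      then obtain a b where "q = [1, a, b]" by (cases q; cases "tl q"; cases "tl (tl q)") auto
      then show ?thesis using inv by (simp add: diff_vec_def unit_fun_def)
    qed (use False in \<open>auto simp: unit_fun_def\<close>)
  qed
qed

lemma mat_repr_append:
  assumes A: "mat_repr bs1 f A" and B: "mat_repr bs2 f B"
  shows "mat_repr (bs1 @ bs2) f
    (four_block_mat A (0\<^sub>m (length bs1) (length bs2)) (0\<^sub>m (length bs2) (length bs1)) B)"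
    (is "mat_repr _ f ?M")
proof -
  let ?n1 = "length bs1" and ?n2 = "length bs2"
  have Ac: "A \<in> carrier_mat ?n1 ?n1" and Acol: "\<And>j. j < ?n1 \<Longrightarrow> f (bs1 ! j) = lin_comb (\<lambda>i. A $$ (i, j)) bs1"
    using A unfolding mat_repr_iff_lin_comb by auto
  have Bc: "B \<in> carrier_mat ?n2 ?n2" and Bcol: "\<And>j. j < ?n2 \<Longrightarrow> f (bs2 ! j) = lin_comb (\<lambda>i. B $$ (i, j)) bs2"
    using B unfolding mat_repr_iff_lin_comb by auto
  have entry: "?M $$ (i, j) = (if i < ?n1 then if j < ?n1 then A $$ (i, j) else 0
      else if j < ?n1 then 0 else B $$ (i - ?n1, j - ?n1))"
    if "i < ?n1 + ?n2" "j < ?n1 + ?n2" for i j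
    using that Ac Bc by (simp add: index_mat_four_block)
  have "f ((bs1 @ bs2) ! j) = lin_comb (\<lambda>i. ?M $$ (i, j)) (bs1 @ bs2)" if j: "j < ?n1 + ?n2" for j
  proof (cases "j < ?n1")
    case True
    have "lin_comb (\<lambda>i. ?M $$ (i, j)) bs1 = lin_comb (\<lambda>i. A $$ (i, j)) bs1"
      by (rule lin_comb_cong) (simp add: entry j True)
    moreover have "lin_comb (\<lambda>k. ?M $$ (?n1 + k, j)) bs2 = (\<lambda>_. 0)"
      by (rule lin_comb_zero) (simp add: entry j True)
    ultimately show ?thesis using True by (simp add: lin_comb_append nth_append Acol)
  next
    case False
    have "lin_comb (\<lambda>i. ?M $$ (i, j)) bs1 = (\<lambda>_. 0)"
      by (rule lin_comb_zero) (simp add: entry j False)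
    moreover have "lin_comb (\<lambda>k. ?M $$ (?n1 + k, j)) bs2 = lin_comb (\<lambda>i. B $$ (i, j - ?n1)) bs2"
      by (rule lin_comb_cong) (use j False in \<open>simp add: entry\<close>)
    ultimately show ?thesis using False j by (simp add: lin_comb_append nth_append Bcol)
  qed
  then show ?thesis unfolding mat_repr_iff_lin_comb using Ac Bc by auto
qed

lemma sum_lessThan_mult_nat: "(\<Sum>p<a * (b::nat). f p) = (\<Sum>i<a. \<Sum>k<b. f (i * b + k))"
proof (induction a)
  case (Suc a)
  then show ?case by (simp add: add.commute[of b] sum_lessThan_add_nat)
qed simp

lemma embed_summand_lin_comb: "embed_summand i (lin_comb c B) = lin_comb c (map (embed_summand i) B)"
proof (rule ext)
  fix q show "embed_summand i (lin_comb c B) q = lin_comb c (map (embed_summand i) B) q"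
    by (cases "2 \<le> length q \<and> q ! 0 = 0 \<and> q ! 1 = i") (auto simp: embed_summand_def lin_comb_def)
qed

lemma lin_comb_embed_basis:
  "lin_comb c (embed_basis n B)
    = (\<lambda>q. \<Sum>i<n. embed_summand i (lin_comb (\<lambda>k. c (i * length B + k)) B) q)"
proof (rule ext)
  fix q
  have "lin_comb c (embed_basis n B) q
      = (\<Sum>p<n * length B. c p * embed_summand (p div length B) (B ! (p mod length B)) q)"
    by (simp add: lin_comb_def embed_basis_def)
  also have "\<dots> = (\<Sum>i<n. \<Sum>k<length B. c (i * length B + k)
      * embed_summand ((i * length B + k) div length B) (B ! ((i * length B + k) mod length B)) q)"
    by (rule sum_lessThan_mult_nat)
  also have "\<dots> = (\<Sum>i<n. \<Sum>k<length B. c (i * length B + k) * embed_summand i (B ! k) q)"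
    by (intro sum.cong refl) (simp add: mult_add_div_nat)
  finally show "lin_comb c (embed_basis n B) q
      = (\<Sum>i<n. embed_summand i (lin_comb (\<lambda>k. c (i * length B + k)) B) q)"
    unfolding embed_summand_lin_comb by (simp add: lin_comb_def)
qed

lemma mat_repr_embed_basis:
  assumes \<sigma>: "\<sigma> permutes {..<n}" and reprs: "\<And>i. i < n \<Longrightarrow> mat_repr B (g i) (Ms i)"
    and f: "\<And>i y. i < n \<Longrightarrow> f (embed_summand i y) = embed_summand (\<sigma> i) (g (\<sigma> i) y)"
  shows "mat_repr (embed_basis n B) f (block_perm_mat n (length B) Ms \<sigma>)"
  unfolding mat_repr_iff_lin_comb
proof (intro conjI allI impI)
  let ?w = "length B" and ?M = "block_perm_mat n (length B) Ms \<sigma>"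
  show "?M \<in> carrier_mat (length (embed_basis n B)) (length (embed_basis n B))" by simp
  fix j assume "j < length (embed_basis n B)"
  then have j: "j < n * ?w" by simp
  define i0 where "i0 = j div ?w"
  define k0 where "k0 = j mod ?w"
  have i0: "i0 < n" and k0: "k0 < ?w" and j_eq: "j = i0 * ?w + k0"
    using j by (auto simp: i0_def k0_def less_mult_imp_div_less intro: mod_less_divisor)
  have \<sigma>i0: "\<sigma> i0 < n" using permutes_in_image[OF \<sigma>] i0 by simp
  have "f (embed_basis n B ! j) = embed_summand (\<sigma> i0) (lin_comb (\<lambda>k. Ms (\<sigma> i0) $$ (k, k0)) B)"
    using reprs[OF \<sigma>i0] k0 by (simp add: nth_embed_basis j i0_def[symmetric] k0_def[symmetric] f[OF i0]
        mat_repr_iff_lin_comb)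
  also have "\<dots> = (\<lambda>q. \<Sum>i<n. if i = \<sigma> i0 then embed_summand (\<sigma> i0) (lin_comb (\<lambda>k. Ms (\<sigma> i0) $$ (k, k0)) B) q else 0)"
    using \<sigma>i0 by (simp add: sum.delta')
  also have "\<dots> = lin_comb (\<lambda>r. ?M $$ (r, j)) (embed_basis n B)"
    unfolding lin_comb_embed_basis
  proof (intro ext sum.cong refl)
    fix q i assume "i \<in> {..<n}"
    then have "lin_comb (\<lambda>k. ?M $$ (i * ?w + k, j)) B
        = (if i = \<sigma> i0 then lin_comb (\<lambda>k. Ms (\<sigma> i0) $$ (k, k0)) B else (\<lambda>_. 0))"
      using i0 k0 by (auto simp: j_eq block_perm_mat_index intro: lin_comb_cong lin_comb_zero)
    then show "(if i = \<sigma> i0 then embed_summand (\<sigma> i0) (lin_comb (\<lambda>k. Ms (\<sigma> i0) $$ (k, k0)) B) q else 0)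
        = embed_summand i (lin_comb (\<lambda>k. ?M $$ (i * ?w + k, j)) B) q"
      by (simp add: embed_summand_def)
  qed
  finally show "f (embed_basis n B ! j) = lin_comb (\<lambda>r. ?M $$ (r, j)) (embed_basis n B)" .
qed

lemma lin_comb_sum_zero_basis:
  "lin_comb c (sum_zero_basis pre n d)
    = (\<lambda>q. \<Sum>j<d - 1. \<Sum>i<n - 1. c (j * (n - 1) + i) * diff_vec pre n i j q)"
proof (rule ext)
  fix q
  have "lin_comb c (sum_zero_basis pre n d) q
      = (\<Sum>p<(d - 1) * (n - 1). c p * diff_vec pre n (p mod (n - 1)) (p div (n - 1)) q)"
    by (simp add: lin_comb_def sum_zero_basis_def)
  also have "\<dots> = (\<Sum>j<d - 1. \<Sum>i<n - 1. c (j * (n - 1) + i) * diff_vec pre n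
      ((j * (n - 1) + i) mod (n - 1)) ((j * (n - 1) + i) div (n - 1)) q)"
    by (rule sum_lessThan_mult_nat)
  also have "\<dots> = (\<Sum>j<d - 1. \<Sum>i<n - 1. c (j * (n - 1) + i) * diff_vec pre n i j q)"
    by (intro sum.cong refl) (simp add: mult_add_div_nat)
  finally show "lin_comb c (sum_zero_basis pre n d) q
      = (\<Sum>j<d - 1. \<Sum>i<n - 1. c (j * (n - 1) + i) * diff_vec pre n i j q)" .
qed

lemma sum_diff_vec_delta:
  assumes "a < n"
  shows "(\<Sum>i<n - 1. (if i = a then 1 else 0) * diff_vec pre n i j q)
    = unit_fun (pre @ [a, j]) q - unit_fun (pre @ [n - 1, j]) q"
proof (cases "a < n - 1")
  case True
  then show ?thesis by (simp add: diff_vec_def if_distrib[of "\<lambda>x. x * _"] sum.delta' cong: if_cong)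
next
  case False
  then have "a = n - 1" using assms by simp
  then show ?thesis by (simp add: if_distrib[of "\<lambda>x. x * _"] cong: if_cong)
qed

lemma sum_zero_perm_mat_column:
  assumes \<sigma>: "\<sigma> permutes {..<n}" and i0: "i0 < n - 1"
  shows "(\<Sum>i<n - 1. sum_zero_perm_mat n \<sigma> $$ (i, i0) * diff_vec pre n i j q)
    = unit_fun (pre @ [\<sigma> i0, j]) q - unit_fun (pre @ [\<sigma> (n - 1), j]) q"
proof -
  have \<sigma>n: "\<sigma> i0 < n" "\<sigma> (n - 1) < n" using permutes_in_image[OF \<sigma>] i0 by auto
  have "(\<Sum>i<n - 1. sum_zero_perm_mat n \<sigma> $$ (i, i0) * diff_vec pre n i j q)
      = (\<Sum>i<n - 1. (if i = \<sigma> i0 then 1 else 0) * diff_vec pre n i j q)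
        - (\<Sum>i<n - 1. (if i = \<sigma> (n - 1) then 1 else 0) * diff_vec pre n i j q)"
    using i0 by (simp add: sum_zero_perm_mat_def sum_subtractf[symmetric] left_diff_distrib)
  then show ?thesis
    using sum_diff_vec_delta[OF \<sigma>n(1), of pre j q] sum_diff_vec_delta[OF \<sigma>n(2), of pre j q] by simp
qed

definition sum_zero_action_mat :: "nat \<Rightarrow> nat \<Rightarrow> (nat \<Rightarrow> nat) \<Rightarrow> real mat" where
  "sum_zero_action_mat d n \<sigma> = block_diag_mat (d - 1) (n - 1) (\<lambda>_. sum_zero_perm_mat n \<sigma>)"

lemma det_sum_zero_action_mat:
  assumes "\<sigma> permutes {..<n}" "1 \<le> n"
  shows "det (sum_zero_action_mat d n \<sigma>) = signof \<sigma> ^ (d - 1)"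
proof -
  have "det (sum_zero_action_mat d n \<sigma>) = (\<Prod>i<d - 1. det (sum_zero_perm_mat n \<sigma>))"
    unfolding sum_zero_action_mat_def by (rule det_block_diag_mat) (rule sum_zero_perm_mat_carrier)
  then show ?thesis using det_sum_zero_perm_mat[OF assms] by simp
qed

lemma mat_repr_sum_zero_basis:
  assumes \<sigma>: "\<sigma> permutes {..<n}"
    and f: "\<And>i j. i < n - 1 \<Longrightarrow> j < d - 1
      \<Longrightarrow> f (diff_vec pre n i j) = (\<lambda>q. unit_fun (pre @ [\<sigma> i, j]) q - unit_fun (pre @ [\<sigma> (n - 1), j]) q)"
  shows "mat_repr (sum_zero_basis pre n d) f (sum_zero_action_mat d n \<sigma>)"
  unfolding mat_repr_iff_lin_comb
proof (intro conjI allI impI)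
  let ?C = "sum_zero_action_mat d n \<sigma>"
  show "?C \<in> carrier_mat (length (sum_zero_basis pre n d)) (length (sum_zero_basis pre n d))"
    by (simp add: sum_zero_action_mat_def)
  fix p assume "p < length (sum_zero_basis pre n d)"
  then have p: "p < (d - 1) * (n - 1)" by simp
  define i0 where "i0 = p mod (n - 1)"
  define j0 where "j0 = p div (n - 1)"
  have "n - 1 > 0" using p by (cases "n - 1") auto
  then have i0: "i0 < n - 1" by (simp add: i0_def)
  have j0: "j0 < d - 1" using p by (simp add: j0_def less_mult_imp_div_less)
  have p_eq: "p = j0 * (n - 1) + i0" unfolding i0_def j0_def by (rule div_mult_mod_eq[symmetric])
  have "f (sum_zero_basis pre n d ! p) = f (diff_vec pre n i0 j0)"
    by (simp add: nth_sum_zero_basis[OF p] i0_def j0_def)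
  also have "\<dots> = (\<lambda>q. unit_fun (pre @ [\<sigma> i0, j0]) q - unit_fun (pre @ [\<sigma> (n - 1), j0]) q)"
    by (rule f[OF i0 j0])
  also have "\<dots> = (\<lambda>q. \<Sum>i<n - 1. sum_zero_perm_mat n \<sigma> $$ (i, i0) * diff_vec pre n i j0 q)"
    using sum_zero_perm_mat_column[OF \<sigma> i0] by simp
  also have "\<dots> = (\<lambda>q. \<Sum>j<d - 1. if j = j0
      then \<Sum>i<n - 1. sum_zero_perm_mat n \<sigma> $$ (i, i0) * diff_vec pre n i j q else 0)"
    using j0 by simp
  also have "\<dots> = lin_comb (\<lambda>r. ?C $$ (r, p)) (sum_zero_basis pre n d)"
    unfolding lin_comb_sum_zero_basis p_eq using i0 j0
    by (intro ext sum.cong refl) (auto simp: sum_zero_action_mat_def block_diag_mat_index)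
  finally show "f (sum_zero_basis pre n d ! p) = lin_comb (\<lambda>r. ?C $$ (r, p)) (sum_zero_basis pre n d)" .
qed

lemma inSigma_BaseE:
  assumes "inSigma rs (Base \<sigma>)"
  obtains n where "rs = [n]" "\<sigma> permutes {..<n}"
  using assms by (cases rs; cases "tl rs") auto

lemma inSigma_NodeE:
  assumes "inSigma rs (Node G \<sigma>)"
  obtains n m r where "rs = n # m # r" "\<sigma> permutes {..<n}" "\<And>i. i < n \<Longrightarrow> inSigma (m # r) (G i)"
  using assms by (cases rs; cases "tl rs") auto

primrec wreath_action_mat :: "nat \<Rightarrow> nat list \<Rightarrow> wr \<Rightarrow> real mat" where
  "wreath_action_mat d rs (Base \<sigma>) = sum_zero_action_mat d (hd rs) \<sigma>"
| "wreath_action_mat d rs (Node G \<sigma>) = four_block_mat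
     (block_perm_mat (hd rs) (length (wreath_basis d (tl rs))) (\<lambda>i. wreath_action_mat d (tl rs) (G i)) \<sigma>)
     (0\<^sub>m (hd rs * length (wreath_basis d (tl rs))) ((d - 1) * (hd rs - 1)))
     (0\<^sub>m ((d - 1) * (hd rs - 1)) (hd rs * length (wreath_basis d (tl rs))))
     (sum_zero_action_mat d (hd rs) \<sigma>)"

lemma mat_repr_wreath_action_mat:
  "admissible rs \<Longrightarrow> inSigma rs S \<Longrightarrow> mat_repr (wreath_basis d rs) (act S) (wreath_action_mat d rs S)"
proof (induction S arbitrary: rs)
  case (Base \<sigma>)
  then obtain n where rs: "rs = [n]" and \<sigma>: "\<sigma> permutes {..<n}" by (metis inSigma_BaseE)
  show ?case
    unfolding rs wreath_basis.simps wreath_action_mat.simps list.sel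
    by (rule mat_repr_sum_zero_basis[OF \<sigma>]) (rule act_diff_vec_Base[OF \<sigma>])
next
  case (Node G \<sigma>)
  then obtain n m r where rs: "rs = n # m # r" and \<sigma>: "\<sigma> permutes {..<n}"
    and G: "\<And>i. i < n \<Longrightarrow> inSigma (m # r) (G i)" by (metis inSigma_NodeE)
  have emb: "mat_repr (embed_basis n (wreath_basis d (m # r))) (act (Node G \<sigma>))
      (block_perm_mat n (length (wreath_basis d (m # r))) (\<lambda>i. wreath_action_mat d (m # r) (G i)) \<sigma>)"
  proof (rule mat_repr_embed_basis[OF \<sigma>])
    fix i assume "i < n"
    then show "mat_repr (wreath_basis d (m # r)) (act (G i)) (wreath_action_mat d (m # r) (G i))"
      using Node.IH[OF rangeI] Node.prems(1) G rs by simp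
  qed (rule act_embed_summand[OF \<sigma>])
  have one: "mat_repr (sum_zero_basis [1] n d) (act (Node G \<sigma>)) (sum_zero_action_mat d n \<sigma>)"
    by (rule mat_repr_sum_zero_basis[OF \<sigma>]) (rule act_diff_vec_Node[OF \<sigma>])
  from mat_repr_append[OF emb one] show ?case unfolding rs by (simp del: act.simps)
qed

lemma det_wreath_action_mat:
  "admissible rs \<Longrightarrow> inSigma rs S \<Longrightarrow> det (wreath_action_mat d rs S) = orient d rs S"
proof (induction S arbitrary: rs)
  case (Base \<sigma>)
  then obtain n where rs: "rs = [n]" and \<sigma>: "\<sigma> permutes {..<n}" by (metis inSigma_BaseE)
  then show ?case using Base.prems(1) by (simp add: det_sum_zero_action_mat)
next
  case (Node G \<sigma>)
  then obtain n m r where rs: "rs = n # m # r" and \<sigma>: "\<sigma> permutes {..<n}"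
    and G: "\<And>i. i < n \<Longrightarrow> inSigma (m # r) (G i)" by (metis inSigma_NodeE)
  have adm: "admissible (m # r)" "2 \<le> n" using Node.prems(1) rs by auto
  define w where "w = length (wreath_basis d (m # r))"
  define Ms where "Ms = (\<lambda>i. wreath_action_mat d (m # r) (G i))"
  have Ms: "Ms i \<in> carrier_mat w w" if "i < n" for i
    using mat_repr_wreath_action_mat[OF adm(1) G[OF that]] by (simp add: mat_repr_def Ms_def w_def)
  have "det (wreath_action_mat d rs (Node G \<sigma>))
      = det (block_perm_mat n w Ms \<sigma>) * det (sum_zero_action_mat d n \<sigma>)"
    unfolding rs by (simp add: w_def Ms_def del: wreath_basis.simps)
      (rule det_four_block_mat_lower_left_zero, auto simp: sum_zero_action_mat_def)
  also have "\<dots> = signof \<sigma> ^ (w + (d - 1)) * (\<Prod>i<n. det (Ms i))"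
    using adm by (simp add: det_block_perm_mat[OF \<sigma> Ms] det_sum_zero_action_mat[OF \<sigma>] power_add)
  also have "w + (d - 1) = (d - 1) * prod_list (m # r)"
    unfolding w_def by (rule length_wreath_basis[OF adm(1)])
  also have "(\<Prod>i<n. det (Ms i)) = (\<Prod>i<n. of_int (orient d (m # r) (G i)))"
    using Node.IH[OF rangeI adm(1) G] by (simp add: Ms_def)
  finally show ?case unfolding rs by simp
qed

section \<open>The orientation character\<close>

lemma abs_orient: "inSigma rs S \<Longrightarrow> \<bar>orient d rs S\<bar> = 1"
proof (induction S arbitrary: rs)
  case (Base \<sigma>)
  show ?case by (simp add: power_abs sign_def)
next
  case (Node G \<sigma>)
  then obtain n m r where rs: "rs = n # m # r" and G: "\<And>i. i < n \<Longrightarrow> inSigma (m # r) (G i)"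
    by (metis inSigma_NodeE)
  have "\<bar>\<Prod>i<n. orient d (m # r) (G i)\<bar> = 1"
    using Node.IH[OF rangeI G] by (simp add: abs_prod)
  then show ?case unfolding rs by (simp add: abs_mult power_abs sign_def)
qed

lemma orient_in_pm1: "inSigma rs S \<Longrightarrow> orient d rs S \<in> {-1, 1}"
  using abs_orient[of rs S d] by (auto simp: abs_if split: if_splits)

lemma orient_mult:
  "inSigma rs S \<Longrightarrow> inSigma rs T \<Longrightarrow> orient d rs (mult S T) = orient d rs S * orient d rs T"
proof (induction S arbitrary: rs T)
  case (Base \<sigma>)
  then obtain n where rs: "rs = [n]" and \<sigma>: "\<sigma> permutes {..<n}" by (metis inSigma_BaseE)
  obtain \<tau> where T: "T = Base \<tau>" "\<tau> permutes {..<n}" using Base.prems(2) rs by (cases T) auto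
  have "sign (\<sigma> \<circ> \<tau>) = sign \<sigma> * sign \<tau>"
    using \<sigma> T(2) by (intro sign_compose) (auto simp: permutation_permutes)
  then show ?case unfolding T(1) by (simp add: power_mult_distrib)
next
  case (Node G \<sigma>)
  then obtain n m r where rs: "rs = n # m # r" and \<sigma>: "\<sigma> permutes {..<n}"
    and G: "\<And>i. i < n \<Longrightarrow> inSigma (m # r) (G i)" by (metis inSigma_NodeE)
  obtain H \<tau> where T: "T = Node H \<tau>" "\<tau> permutes {..<n}" "\<And>i. i < n \<Longrightarrow> inSigma (m # r) (H i)"
    using Node.prems(2) rs by (cases T) auto
  let ?o = "orient d (m # r)" and ?inv = "Hilbert_Choice.inv \<sigma>"
  have inv: "?inv permutes {..<n}" by (rule permutes_inv[OF \<sigma>])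
  have "sign (\<sigma> \<circ> \<tau>) = sign \<sigma> * sign \<tau>"
    using \<sigma> T(2) by (intro sign_compose) (auto simp: permutation_permutes)
  moreover have "(\<Prod>i<n. ?o (mult (G i) (H (?inv i)))) = (\<Prod>i<n. ?o (G i)) * (\<Prod>i<n. ?o (H (?inv i)))"
    using Node.IH[OF rangeI G T(3)] permutes_in_image[OF inv] by (simp add: prod.distrib)
  moreover have "(\<Prod>i<n. ?o (H (?inv i))) = (\<Prod>i<n. ?o (H i))"
    using prod.permute[OF inv, of "\<lambda>i. ?o (H i)"] by (simp add: comp_def)
  ultimately show ?case unfolding T(1) rs by (simp add: power_mult_distrib algebra_simps)
qed

theorem lemma3p6:
  fixes d :: nat and ns :: "nat list" and S :: wr
  assumes "ns \<noteq> []" and "d \<ge> 1" and "\<forall>n\<in>set ns. n \<ge> 2"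
    and "inSigma (rev ns) S"
  shows "(\<exists>bs A. is_basis (Wsp d (rev ns)) bs \<and> mat_repr bs (act S) A)
    \<and> (\<forall>bs A. is_basis (Wsp d (rev ns)) bs \<and> mat_repr bs (act S) A
          \<longrightarrow> sgn (det A) = of_int (orient d (rev ns) S))
    \<and> orient d (rev ns) S \<in> {-1, 1}
    \<and> (\<forall>T. inSigma (rev ns) T \<longrightarrow>
          orient d (rev ns) (mult S T) = orient d (rev ns) S * orient d (rev ns) T)"
proof -
  let ?rs = "rev ns"
  have rs: "admissible ?rs" using assms(1,3) by (simp add: admissible_def)
  note S = assms(4)
  have basis: "is_basis (Wsp d ?rs) (wreath_basis d ?rs)" by (rule is_basis_wreath_basis[OF rs])
  have repr: "mat_repr (wreath_basis d ?rs) (act S) (wreath_action_mat d ?rs S)"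
    by (rule mat_repr_wreath_action_mat[OF rs S])
  have closed: "lin_comb c bs \<in> Wsp d ?rs" if "is_basis (Wsp d ?rs) bs" for c bs
    using that assms(1) by (intro Wsp_lin_comb) (auto simp: is_basis_def)
  have "sgn (det A) = of_int (orient d ?rs S)" if "is_basis (Wsp d ?rs) bs" "mat_repr bs (act S) A" for bs A
  proof -
    have "det A = det (wreath_action_mat d ?rs S)"
      by (rule det_mat_repr_basis_indep[OF basis that(1) closed[OF basis] closed[OF that(1)]
            act_lin_comb repr that(2)])
    then show ?thesis using det_wreath_action_mat[OF rs S] orient_in_pm1[OF S, of d] by auto
  qed
  then show ?thesis using basis repr orient_in_pm1[OF S] orient_mult[OF S] by blast
qed

end
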